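(* Assume $D=\mathbb R$ and that $\phi:\mathbb R\to(0,\infty)$ is strictly positive and twice continuously differentiable. Let $\lambda>0$ and $\Lambda(g)=l_t(g)+\lambda\|\Pi g\|^2$ on $W^{m,2}([0,t])$. Then the gradient $\nabla\Lambda:W^{m,2}([0,t])\to W^{m,2}([0,t])$ is Lipschitz continuous on every bounded subset of $W^{m,2}([0,t])$.
   Context: Let $(\Omega,\mathcal F,(\mathcal F_s)_{s\ge 0},P)$ be a filtered probability space with right-continuous filtration, and let $(N_s)_{s\ge0}$ be an adapted counting process which under $P$ is a homogeneous Poisson process with rate $1$. Fix $t>0$ and let $\tau_1<\dots<\tau_{N_t}$ be the jump times of $N$ in $[0,t]$. Let $(Z_s)_{0\le s\le t}$ be a real-valued càdlàg semimartingale and $(Y_s)_{0\le s\le t}$ a predictable càdlàg process with values in $[0,\infty)$ such that $Y_s>0$ whenever $\Delta N_s=1$. Fix an integer $m\ge1$. $W^{m,2}([0,t])$ is equipped with an inner product $\langle\cdot,\cdot\rangle$, with norm $\|\cdot\|$ equivalent to the standard Sobolev norm, making it a reproducing kernel Hilbert space with kernel $R$. Fix $\psi_1,\ldots,\psi_l\in W^{m,2}([0,t])$ and let $\Pi$ be the orthogonal projection onto $\mathrm{span}\{\psi_1,\ldots,\psi_l\}^\perp$. Stochastic integrals are defined pathwise: $\int_0^{s-} h(u)\,\mathrm{d}Z_u:=h(s)Z_{s-}-h(0)Z_0-\int_0^s Z_{u-}h'(u)\,\mathrm{d}u$ for weakly differentiable $h$, and $X_{s-}g:=\int_0^{s-}g(s-u)\,\mathrm{d}Z_u$.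 The minus-log-likelihood is $$l_t(g)=\int_0^t Y_s\,\phi(X_{s-}g)\,\mathrm{d}s-\sum_{i=1}^{N_t}\log\big(Y_{\tau_i}\phi(X_{\tau_i-}g)\big),$$ and $\nabla\Lambda(g)=\nabla l_t(g)+2\lambda\Pi g$, where $\nabla l_t(g)\in W^{m,2}([0,t])$ represents the Gâteaux derivative of $l_t$ at $g$ via $\langle\cdot,\cdot\rangle$. *)

theory Defs
  imports "HOL-Analysis.Analysis"
begin

text \<open>Pathwise objects on the interval [0,t].  Functions real => real are used
  throughout; elements of the Sobolev space are normalised to vanish outside [0,t].\<close>

definition cadlag_on :: "real \<Rightarrow> (real \<Rightarrow> real) \<Rightarrow> bool" where
  "cadlag_on t Z \<longleftrightarrow>
     (\<forall>x\<in>{0..<t}. (Z \<longlongrightarrow> Z x) (at_right x)) \<and>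
     (\<forall>x\<in>{0<..t}. \<exists>L. (Z \<longlongrightarrow> L) (at_left x))"

definition leftlim :: "(real \<Rightarrow> real) \<Rightarrow> real \<Rightarrow> real" where
  "leftlim Z s = (if s \<le> 0 then Z 0 else Lim (at_left s) Z)"

text \<open>d 0 = h, d (k+1) is the (weak) derivative of d k, k < m, each d k square integrable
  on [0,t]; this is W^{m,2}([0,t]) in dimension one (absolutely continuous (m-1)-th derivative,
  m-th derivative in L^2).\<close>
definition sob_derivs :: "nat \<Rightarrow> real \<Rightarrow> (real \<Rightarrow> real) \<Rightarrow> (nat \<Rightarrow> real \<Rightarrow> real) \<Rightarrow> bool" where
  "sob_derivs m t h d \<longleftrightarrow>
     (\<forall>x\<in>{0..t}. d 0 x = h x) \<and>
     (\<forall>k\<le>m. set_borel_measurable lborel {0..t} (d k) \<and>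
             set_integrable lborel {0..t} (\<lambda>x. (d k x)^2)) \<and>
     (\<forall>k<m. \<forall>x\<in>{0..t}. d k x = d k 0 + (LBINT u:{0..x}. d (Suc k) u))"

definition sobolev_space :: "nat \<Rightarrow> real \<Rightarrow> (real \<Rightarrow> real) set" where
  "sobolev_space m t = {h. (\<forall>x. x \<notin> {0..t} \<longrightarrow> h x = 0) \<and> (\<exists>d. sob_derivs m t h d)}"

definition sob_sqnorm :: "nat \<Rightarrow> real \<Rightarrow> (nat \<Rightarrow> real \<Rightarrow> real) \<Rightarrow> real" where
  "sob_sqnorm m t d = (\<Sum>k\<le>m. LBINT x:{0..t}. (d k x)^2)"

definition sobolev_ip :: "nat \<Rightarrow> real \<Rightarrow> ((real \<Rightarrow> real) \<Rightarrow> (real \<Rightarrow> real) \<Rightarrow> real) \<Rightarrow> bool" where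
  "sobolev_ip m t ip \<longleftrightarrow>
     (\<forall>f\<in>sobolev_space m t. \<forall>g\<in>sobolev_space m t. ip f g = ip g f) \<and>
     (\<forall>f\<in>sobolev_space m t. \<forall>g\<in>sobolev_space m t. \<forall>h\<in>sobolev_space m t. \<forall>a b.
        ip (\<lambda>x. a * f x + b * g x) h = a * ip f h + b * ip g h) \<and>
     (\<exists>c C. 0 < c \<and> 0 < C \<and>
        (\<forall>h\<in>sobolev_space m t. \<forall>d. sob_derivs m t h d \<longrightarrow>
           c * sob_sqnorm m t d \<le> ip h h \<and> ip h h \<le> C * sob_sqnorm m t d))"

definition rkhs_kernel :: "nat \<Rightarrow> real \<Rightarrow> ((real \<Rightarrow> real) \<Rightarrow> (real \<Rightarrow> real) \<Rightarrow> real)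
    \<Rightarrow> (real \<Rightarrow> real \<Rightarrow> real) \<Rightarrow> bool" where
  "rkhs_kernel m t ip R \<longleftrightarrow>
     (\<forall>x\<in>{0..t}. R x \<in> sobolev_space m t \<and> (\<forall>h\<in>sobolev_space m t. ip (R x) h = h x))"

definition orth_proj :: "nat \<Rightarrow> real \<Rightarrow> ((real \<Rightarrow> real) \<Rightarrow> (real \<Rightarrow> real) \<Rightarrow> real)
    \<Rightarrow> (nat \<Rightarrow> real \<Rightarrow> real) \<Rightarrow> nat \<Rightarrow> (real \<Rightarrow> real) \<Rightarrow> (real \<Rightarrow> real)" where
  "orth_proj m t ip psi l g =
     (THE p. p \<in> sobolev_space m t \<and> (\<forall>i<l. ip p (psi i) = 0) \<and>
             (\<exists>c. \<forall>x. g x - p x = (\<Sum>i<l. c i * psi i x)))"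

definition wderiv :: "real \<Rightarrow> (real \<Rightarrow> real) \<Rightarrow> (real \<Rightarrow> real)" where
  "wderiv t g = (SOME g'. set_borel_measurable lborel {0..t} g' \<and>
                          set_integrable lborel {0..t} g' \<and>
                          (\<forall>x\<in>{0..t}. g x = g 0 + (LBINT u:{0..x}. g' u)))"

text \<open>Pathwise stochastic integral int_0^{s-} h(u) dZ_u, given h and its derivative h'.\<close>
definition pw_int :: "(real \<Rightarrow> real) \<Rightarrow> (real \<Rightarrow> real) \<Rightarrow> (real \<Rightarrow> real) \<Rightarrow> real \<Rightarrow> real" where
  "pw_int Z h h' s = h s * leftlim Z s - h 0 * Z 0 - (LBINT u:{0..s}. leftlim Z u * h' u)"

definition Xminus :: "real \<Rightarrow> (real \<Rightarrow> real) \<Rightarrow> (real \<Rightarrow> real) \<Rightarrow> real \<Rightarrow> real" where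
  "Xminus t Z g s = pw_int Z (\<lambda>u. g (s - u)) (\<lambda>u. - wderiv t g (s - u)) s"

text \<open>Minus-log-likelihood l_t(g); J is the (finite) set of jump times of N in [0,t].\<close>
definition loglik :: "(real \<Rightarrow> real) \<Rightarrow> (real \<Rightarrow> real) \<Rightarrow> (real \<Rightarrow> real) \<Rightarrow> real set \<Rightarrow> real
    \<Rightarrow> (real \<Rightarrow> real) \<Rightarrow> real" where
  "loglik phi Y Z J t g =
     (LBINT s:{0..t}. Y s * phi (Xminus t Z g s)) - (\<Sum>\<tau>\<in>J. ln (Y \<tau> * phi (Xminus t Z g \<tau>)))"

end

theory Submission
  imports Defs
begin

text \<open>By the Sobolev embedding, \<open>sup \<bar>f\<bar>\<close> and \<open>\<parallel>f'\<parallel>\<^sub>1\<close> are bounded by the norm of \<open>f\<close>; after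
  integration by parts \<open>X\<^sub>s\<^sub>- f\<close> is therefore a bounded linear functional of \<open>f\<close>, uniformly in
  \<open>s \<in> [0,t]\<close>.  For \<open>k = \<nabla>l\<^sub>t(g) - \<nabla>l\<^sub>t(h)\<close>, the number \<open>\<langle>k, k\<rangle>\<close> is the limit of the mixed
  second differences \<open>(l\<^sub>t(g + \<epsilon>k) - l\<^sub>t(g)) - (l\<^sub>t(h + \<epsilon>k) - l\<^sub>t(h))\<close> divided by \<open>\<epsilon>\<close>.  By the
  mean value inequality these are bounded by \<open>C \<bar>\<epsilon>\<bar> \<parallel>k\<parallel> \<parallel>g - h\<parallel>\<close>, where \<open>C\<close> involves the
  suprema of \<open>\<phi>''\<close> and \<open>(log \<phi>)''\<close> on a compact interval containing all values \<open>X\<^sub>s\<^sub>- f\<close> with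
  \<open>\<parallel>f\<parallel>\<^sup>2 \<le> M\<close>.  Hence \<open>\<parallel>k\<parallel> \<le> C \<parallel>g - h\<parallel>\<close>; the penalty term contributes \<open>2\<lambda>\<close>
  because orthogonal projections are non-expansive.\<close>

section \<open>Lebesgue integrals on intervals\<close>

lemma set_integrable_const_interval: "set_integrable lborel {a..b::real} (\<lambda>x. c::real)"
  unfolding set_integrable_def
  by (rule integrable_scaleR_left) (cases "a \<le> b"; simp add: integrable_real_indicator)

lemma set_integral_nonneg:
  fixes f :: "_ \<Rightarrow> real"
  assumes "\<And>x. x \<in> A \<Longrightarrow> 0 \<le> f x"
  shows "0 \<le> (LINT x:A|M. f x)"
  unfolding set_lebesgue_integral_def
  by (rule integral_nonneg_AE) (use assms in \<open>auto split: split_indicator\<close>)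

lemma set_integrable_subset_interval:
  fixes f :: "real \<Rightarrow> real"
  shows "set_integrable lborel {a..b} f \<Longrightarrow> a \<le> c \<Longrightarrow> d \<le> b \<Longrightarrow> set_integrable lborel {c..d} f"
  by (erule set_integrable_subset) auto

lemma abs_set_integral_le_bound:
  fixes f :: "real \<Rightarrow> real"
  assumes "set_integrable lborel {a..b} f" "a \<le> b" "\<And>x. x \<in> {a..b} \<Longrightarrow> \<bar>f x\<bar> \<le> K"
  shows "\<bar>LBINT x:{a..b}. f x\<bar> \<le> K * (b - a)"
proof -
  have "\<bar>LBINT x:{a..b}. f x\<bar> \<le> (LBINT x:{a..b}. \<bar>f x\<bar>)"
    using set_integral_norm_bound[OF assms(1)] by simp
  also have "\<dots> \<le> (LBINT x:{a..b}. K)"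
    using assms by (intro set_integral_mono) (auto intro: set_integrable_abs set_integrable_const_interval)
  also have "\<dots> = K * (b - a)"
    using assms(2) by (simp add: set_integral_const)
  finally show ?thesis .
qed

lemma set_integral_le_of_subinterval:
  fixes g :: "real \<Rightarrow> real"
  assumes g: "set_integrable lborel {a..b} g" and nonneg: "\<And>x. x \<in> {a..b} \<Longrightarrow> 0 \<le> g x"
    and "x \<le> b"
  shows "(LBINT u:{a..x}. g u) \<le> (LBINT u:{a..b}. g u)"
  using g set_integrable_subset[OF g, of "{a..x}"] nonneg assms(3)
  unfolding set_lebesgue_integral_def set_integrable_def
  by (intro integral_mono) (auto split: split_indicator)

lemma square_integrable_imp_set_integrable:
  fixes f :: "real \<Rightarrow> real"
  assumes "set_borel_measurable lborel {a..b} f" "set_integrable lborel {a..b} (\<lambda>x. (f x)^2)"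
  shows "set_integrable lborel {a..b} f"
proof (rule set_integrable_bound[OF set_integral_add(1)[OF set_integrable_const_interval assms(2)] assms(1)])
  have "\<bar>u\<bar> \<le> 1 + u^2" for u :: real
  proof (cases "\<bar>u\<bar> \<le> 1")
    case False
    then have "\<bar>u\<bar> * 1 \<le> \<bar>u\<bar> * \<bar>u\<bar>" by (intro mult_left_mono) auto
    then show ?thesis by (simp add: power2_eq_square abs_mult_self_eq)
  qed (use zero_le_power2[of u] in linarith)
  then show "AE x in lborel. x \<in> {a..b} \<longrightarrow> norm (f x) \<le> norm (1 + (f x)^2)"
    by auto
qed

text \<open>Cauchy--Schwarz against the constant 1, obtained by integrating
  \<open>\<bar>u\<bar> \<le> r/2 + u\<^sup>2/(2r)\<close> and optimising over \<open>r > 0\<close>.\<close>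

lemma le_sqrt_if_AM_GM_bounds:
  fixes A t Q :: real
  assumes "0 < t" "0 \<le> Q" "\<And>r. 0 < r \<Longrightarrow> A \<le> r * t / 2 + Q / (2 * r)"
  shows "A \<le> sqrt (t * Q)"
proof (cases "Q = 0")
  case True
  show ?thesis
  proof (rule ccontr)
    assume "\<not> ?thesis"
    then have A: "0 < A" using True by simp
    then show False using assms(3)[of "A/t"] True assms(1) by simp
  qed
next
  case False
  then have Q: "0 < Q" using assms(2) by simp
  define r where "r = sqrt (Q / t)"
  have r: "0 < r" using Q assms(1) by (simp add: r_def)
  have "r * t = sqrt (t * Q)" "Q / r = sqrt (t * Q)"
    using Q assms(1) by (simp_all add: r_def real_sqrt_divide field_simps real_sqrt_mult)
  then show ?thesis using assms(3)[OF r] by (simp add: field_simps)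
qed

lemma set_integral_abs_le_sqrt_square:
  fixes f :: "real \<Rightarrow> real"
  assumes t: "0 < t" and meas: "set_borel_measurable lborel {0..t} f"
    and sq: "set_integrable lborel {0..t} (\<lambda>x. (f x)^2)"
  shows "(LBINT x:{0..t}. \<bar>f x\<bar>) \<le> sqrt (t * (LBINT x:{0..t}. (f x)^2))"
proof (rule le_sqrt_if_AM_GM_bounds[OF t])
  show "0 \<le> (LBINT x:{0..t}. (f x)^2)"
    by (rule set_integral_nonneg) auto
  fix r :: real assume r: "0 < r"
  have am_gm: "\<bar>u\<bar> \<le> r / 2 + u^2 / (2 * r)" for u :: real
  proof -
    have "0 \<le> (\<bar>u\<bar> - r)^2" by simp
    then have "2 * r * \<bar>u\<bar> \<le> r^2 + u^2" by (simp add: power2_eq_square algebra_simps)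
    then show ?thesis using r by (simp add: field_simps power2_eq_square)
  qed
  have "(LBINT x:{0..t}. \<bar>f x\<bar>) \<le> (LBINT x:{0..t}. r / 2 + (f x)^2 / (2 * r))"
    using am_gm square_integrable_imp_set_integrable[OF meas sq] sq
    by (intro set_integral_mono) (auto intro: set_integrable_abs set_integrable_const_interval)
  also have "\<dots> = r * t / 2 + (LBINT x:{0..t}. (f x)^2) / (2 * r)"
    using t sq by (subst set_integral_add(2))
      (auto simp: set_integral_const intro: set_integrable_const_interval)
  finally show "(LBINT x:{0..t}. \<bar>f x\<bar>) \<le> r * t / 2 + (LBINT x:{0..t}. (f x)^2) / (2 * r)" .
qed

text \<open>The finite measures with densities \<open>f\<^sup>+\<close> and \<open>f\<^sup>-\<close> agree on all
  half-lines, hence coincide.\<close>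

lemma AE_zero_if_tail_integrals_zero:
  fixes f :: "real \<Rightarrow> real"
  assumes f: "integrable lborel f" and tails: "\<And>x. (LBINT y:{x<..}. f y) = 0"
  shows "AE x in lborel. f x = 0"
proof -
  define P where "P = (\<lambda>y. max 0 (f y))"
  define N where "N = (\<lambda>y. max 0 (- f y))"
  have [measurable]: "f \<in> borel_measurable borel"
    using f by (metis borel_measurable_integrable measurable_lborel2)
  have P: "integrable lborel P" and N: "integrable lborel N"
    using f by (auto simp: P_def N_def)
  have density_tail: "emeasure (density lborel (\<lambda>y. ennreal (g y))) {x<..} = ennreal (LBINT y:{x<..}. g y)"
    if g: "integrable lborel g" and "\<And>y. 0 \<le> g y" for g :: "real \<Rightarrow> real" and x
  proof -
    have [measurable]: "g \<in> borel_measurable borel"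
      using g by (metis borel_measurable_integrable measurable_lborel2)
    have "emeasure (density lborel (\<lambda>y. ennreal (g y))) {x<..} = (\<integral>\<^sup>+y\<in>{x<..}. ennreal (g y) \<partial>lborel)"
      by (rule emeasure_density) auto
    also have "\<dots> = ennreal (LBINT y:{x<..}. g y)"
      using that by (intro nn_set_integral_eq_set_integral) auto
    finally show ?thesis .
  qed
  have tail_integrable: "set_integrable lborel {x<..} g" if "integrable lborel g" for g :: "real \<Rightarrow> real" and x
    using integrable_mult_indicator[OF _ that, of "{x<..}"] by (simp add: set_integrable_def)
  have "f = (\<lambda>y. P y - N y)" by (auto simp: P_def N_def max_def)
  then have "(LBINT y:{x<..}. P y) - (LBINT y:{x<..}. N y) = (LBINT y:{x<..}. f y)" for x
    using tail_integrable[OF P] tail_integrable[OF N] by (simp add: set_integral_diff)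
  then have "density lborel (\<lambda>y. ennreal (P y)) = density lborel (\<lambda>y. ennreal (N y))"
    using density_tail[OF P] density_tail[OF N] tails
    by (intro measure_eqI_lessThan) (auto simp: P_def N_def)
  then have "AE y in lborel. ennreal (P y) = ennreal (N y)"
    by (intro sigma_finite_measure.density_unique[OF lborel.sigma_finite_measure_axioms])
      (auto simp: P_def N_def)
  then show ?thesis
    by (rule eventually_mono) (auto simp: P_def N_def max_def split: if_splits)
qed

lemma AE_eq_on_interval_if_primitives_eq:
  fixes v w :: "real \<Rightarrow> real"
  assumes t: "0 \<le> t" and v: "set_integrable lborel {0..t} v" and w: "set_integrable lborel {0..t} w"
    and prim: "\<And>x. x \<in> {0..t} \<Longrightarrow> (LBINT u:{0..x}. v u) = (LBINT u:{0..x}. w u)"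
  shows "AE x in lborel. x \<in> {0..t} \<longrightarrow> v x = w x"
proof -
  define d where "d = (\<lambda>u. v u - w u)"
  have d: "set_integrable lborel {0..t} d" using v w by (simp add: d_def)
  have prim_d: "(LBINT u:{0..x}. d u) = 0" if "x \<in> {0..t}" for x
    using that prim[OF that] set_integrable_subset_interval[OF v] set_integrable_subset_interval[OF w]
    by (simp add: d_def set_integral_diff)
  have "(LBINT y:{x<..}. indicator {0..t} y * d y) = 0" for x
  proof (cases "x < 0 \<or> t \<le> x")
    case True
    then have "(\<lambda>y. indicator {x<..} y * (indicator {0..t} y * d y)) = (\<lambda>y. indicator {0..t} y * d y)
             \<or> (\<lambda>y. indicator {x<..} y * (indicator {0..t} y * d y)) = (\<lambda>y. 0)"
      by (auto simp: fun_eq_iff split: split_indicator)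
    then show ?thesis
      using prim_d[of t] t by (auto simp: set_lebesgue_integral_def)
  next
    case False
    have "(\<lambda>y. indicator {x<..} y * (indicator {0..t} y * d y))
        = (\<lambda>y. indicator {0..t} y * d y - indicator {0..x} y * d y)"
      using False by (auto simp: fun_eq_iff split: split_indicator)
    then show ?thesis
      using prim_d[of t] prim_d[of x] False d set_integrable_subset_interval[OF d, of 0 x]
      by (simp add: set_lebesgue_integral_def set_integrable_def)
  qed
  then have "AE y in lborel. indicator {0..t} y * d y = 0"
    using d by (intro AE_zero_if_tail_integrals_zero) (simp_all add: set_integrable_def)
  then show ?thesis
    by (rule eventually_mono) (auto simp: d_def split: split_indicator)
qed

lemma set_integral_reflect_interval:
  fixes h :: "real \<Rightarrow> real"
  shows "(LBINT u:{0..s}. h u) = (LBINT u:{0..s}. h (s - u))"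
proof -
  have "(LBINT u:{0..s}. h u) = \<bar>-1\<bar> *\<^sub>R (\<integral>u. indicator {0..s} (s + -1 * u) *\<^sub>R h (s + -1 * u) \<partial>lborel)"
    unfolding set_lebesgue_integral_def by (rule lborel_integral_real_affine) simp
  also have "\<dots> = (LBINT u:{0..s}. h (s - u))"
    unfolding set_lebesgue_integral_def by (auto intro!: Bochner_Integration.integral_cong split: split_indicator)
  finally show ?thesis .
qed

text \<open>Agreement on \<open>A\<close> with a Borel function; unlike \<open>set_borel_measurable\<close>
  this is preserved under composition by the \<open>measurable\<close> method.\<close>

definition borel_on :: "real set \<Rightarrow> (real \<Rightarrow> real) \<Rightarrow> bool" where
  "borel_on A f \<longleftrightarrow> (\<exists>G\<in>borel_measurable borel. \<forall>x\<in>A. f x = G x)"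

lemma borel_onI: "G \<in> borel_measurable borel \<Longrightarrow> (\<And>x. x \<in> A \<Longrightarrow> f x = G x) \<Longrightarrow> borel_on A f"
  unfolding borel_on_def by blast

lemma borel_onE:
  assumes "borel_on A f"
  obtains G where "G \<in> borel_measurable borel" "\<And>x. x \<in> A \<Longrightarrow> f x = G x"
  using assms that unfolding borel_on_def by auto

lemma set_borel_measurable_iff_borel_on:
  assumes A[measurable]: "A \<in> sets borel"
  shows "set_borel_measurable lborel A f \<longleftrightarrow> borel_on A f"
proof
  assume "set_borel_measurable lborel A f"
  then show "borel_on A f"
    by (intro borel_onI[of "\<lambda>x. indicator A x * f x"]) (simp_all add: set_borel_measurable_def)
next
  assume "borel_on A f"
  then obtain G where [measurable]: "G \<in> borel_measurable borel" and G: "\<And>x. x \<in> A \<Longrightarrow> f x = G x"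
    unfolding borel_on_def by blast
  have "(\<lambda>x. indicator A x *\<^sub>R f x) = (\<lambda>x. indicator A x * G x)"
    using G by (auto split: split_indicator)
  then show "set_borel_measurable lborel A f" by (simp add: set_borel_measurable_def)
qed

lemma set_borel_measurable_interval_iff_borel_on:
  "set_borel_measurable lborel {a..b::real} f \<longleftrightarrow> borel_on {a..b} f"
  by (rule set_borel_measurable_iff_borel_on) simp

lemma set_integral_cong_AE_borel_on:
  fixes f g :: "real \<Rightarrow> real"
  assumes [measurable]: "A \<in> sets borel" and f: "borel_on A f" and g: "borel_on A g"
    and ae: "AE x in lborel. x \<in> A \<longrightarrow> f x = g x"
  shows "(LBINT x:A. f x) = (LBINT x:A. g x)"
proof -
  obtain F G where [measurable]: "F \<in> borel_measurable borel" "G \<in> borel_measurable borel"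
    and FG: "\<And>x. x \<in> A \<Longrightarrow> f x = F x" "\<And>x. x \<in> A \<Longrightarrow> g x = G x"
    using f g by (metis borel_onE)
  have "(LBINT x:A. f x) = (LBINT x:A. F x)" "(LBINT x:A. g x) = (LBINT x:A. G x)"
    using FG by (auto intro: set_lebesgue_integral_cong)
  moreover have "(LBINT x:A. F x) = (LBINT x:A. G x)"
    using ae FG by (intro set_lebesgue_integral_cong_AE) (auto elim!: eventually_mono)
  ultimately show ?thesis by simp
qed

section \<open>Cadlag functions\<close>

lemma right_continuous_tendsto_from_above:
  fixes F :: "real \<Rightarrow> real"
  assumes "(F \<longlongrightarrow> F x) (at_right x)" "y \<longlonglongrightarrow> x" "\<And>n. x \<le> y n"
  shows "(\<lambda>n. F (y n)) \<longlonglongrightarrow> F x"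
  using continuous_within_tendsto_compose'[of x "{x..}" F y sequentially] assms
  by (simp add: continuous_within at_within_Ici_at_right)

lemma ceiling_grid_tendsto_from_above:
  fixes x :: real
  shows "(\<lambda>n. \<lceil>real (Suc n) * x\<rceil> / real (Suc n)) \<longlonglongrightarrow> x"
    and "x \<le> \<lceil>real (Suc n) * x\<rceil> / real (Suc n)"
proof -
  have ge: "x \<le> \<lceil>real (Suc n) * x\<rceil> / real (Suc n)" for n
    using le_of_int_ceiling[of "real (Suc n) * x"] by (simp add: field_simps)
  have le: "\<lceil>real (Suc n) * x\<rceil> / real (Suc n) \<le> x + inverse (real (Suc n))" for n
  proof -
    have "\<lceil>real (Suc n) * x\<rceil> / real (Suc n) \<le> (real (Suc n) * x + 1) / real (Suc n)"
      by (rule divide_right_mono) simp_all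
    then show ?thesis by (simp add: add_divide_distrib inverse_eq_divide)
  qed
  show "(\<lambda>n. \<lceil>real (Suc n) * x\<rceil> / real (Suc n)) \<longlonglongrightarrow> x"
    using ge le by (intro tendsto_sandwich[OF _ _ tendsto_const LIMSEQ_inverse_real_of_nat_add]) auto
  show "x \<le> \<lceil>real (Suc n) * x\<rceil> / real (Suc n)" by (rule ge)
qed

text \<open>A right-continuous function is the pointwise limit of its values on the grids
  \<open>\<int>/(n+1)\<close>, approached from the right.\<close>

lemma cadlag_borel_on:
  assumes "cadlag_on t F"
  shows "borel_on {0..t} F"
proof -
  have rc: "\<And>x. x \<in> {0..<t} \<Longrightarrow> (F \<longlongrightarrow> F x) (at_right x)"
    using assms by (auto simp: cadlag_on_def)
  define y where "y n x = min t (\<lceil>real (Suc n) * x\<rceil> / real (Suc n))" for n x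
  have [measurable]: "(\<lambda>x. F (y n x)) \<in> borel_measurable borel" for n
    unfolding y_def
  proof (rule measurable_compose_countable[where f="\<lambda>i x. F (min t (real_of_int i / real (Suc n)))"
        and g="\<lambda>x. \<lceil>real (Suc n) * x\<rceil>"])
    show "(\<lambda>x. \<lceil>real (Suc n) * x\<rceil>) \<in> borel \<rightarrow>\<^sub>M count_space UNIV" by measurable
  qed simp
  have y_ge: "min t x \<le> y n x" for n x
    using ceiling_grid_tendsto_from_above(2)[of x n] by (simp add: y_def)
  have "(\<lambda>n. F (y n x)) \<longlonglongrightarrow> F x" if x: "x \<in> {0..t}" for x
  proof (cases "x = t")
    case True
    then have "y n x = t" for n using y_ge[of x n] by (simp add: y_def)
    then show ?thesis using True by simp
  next
    case False
    have "(\<lambda>n. y n x) \<longlonglongrightarrow> min t x"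
      unfolding y_def by (intro tendsto_min tendsto_const ceiling_grid_tendsto_from_above(1))
    moreover have "min t x = x" using x by simp
    moreover have "x \<in> {0..<t}" using x False by simp
    ultimately show ?thesis
      using right_continuous_tendsto_from_above[OF rc, of x "\<lambda>n. y n x"] y_ge[of x] by simp
  qed
  then have "F x = lim (\<lambda>n. F (y n x))" if "x \<in> {0..t}" for x
    using that limI by metis
  moreover have "(\<lambda>x. lim (\<lambda>n. F (y n x))) \<in> borel_measurable borel" by measurable
  ultimately show ?thesis by (intro borel_onI) auto
qed

lemma leftlim_borel_on:
  assumes "cadlag_on t F"
  shows "borel_on {0..t} (leftlim F)"
proof -
  have ll: "\<And>x. x \<in> {0<..t} \<Longrightarrow> \<exists>L. (F \<longlongrightarrow> L) (at_left x)"
    using assms by (auto simp: cadlag_on_def)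
  obtain H where [measurable]: "H \<in> borel_measurable borel" and H: "\<And>x. x \<in> {0..t} \<Longrightarrow> F x = H x"
    using cadlag_borel_on[OF assms] unfolding borel_on_def by blast
  define s where "s n x = x - 1 / real (Suc n)" for n x
  have "leftlim F x = lim (\<lambda>n. H (s n x))" if x: "x \<in> {0<..t}" for x
  proof -
    obtain L where L: "(F \<longlongrightarrow> L) (at_left x)" using ll[OF x] by blast
    have s: "(\<lambda>n. s n x) \<longlonglongrightarrow> x"
      using tendsto_diff[OF tendsto_const LIMSEQ_inverse_real_of_nat, of x]
      by (simp add: s_def inverse_eq_divide)
    moreover have below: "s n x < x" for n by (simp add: s_def)
    ultimately have "filterlim (\<lambda>n. s n x) (at_left x) sequentially"
      by (intro tendsto_imp_filterlim_at_left always_eventually) auto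
    then have "(\<lambda>n. F (s n x)) \<longlonglongrightarrow> L"
      by (rule filterlim_compose[OF L])
    moreover have "\<forall>\<^sub>F n in sequentially. 0 < s n x"
      using x by (intro order_tendstoD(1)[OF s]) simp
    then have "\<forall>\<^sub>F n in sequentially. F (s n x) = H (s n x)"
    proof eventually_elim
      case (elim n)
      then show ?case using below[of n] x by (intro H) auto
    qed
    ultimately have "(\<lambda>n. H (s n x)) \<longlonglongrightarrow> L"
      by (rule Lim_transform_eventually)
    then show ?thesis
      using L x by (simp add: leftlim_def tendsto_Lim limI)
  qed
  moreover have "(\<lambda>x. if x \<le> 0 then F 0 else lim (\<lambda>n. H (s n x))) \<in> borel_measurable borel"
    unfolding s_def by measurable
  ultimately show ?thesis
    by (intro borel_onI[of "\<lambda>x. if x \<le> 0 then F 0 else lim (\<lambda>n. H (s n x))"]) (auto simp: leftlim_def)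
qed

lemma bounded_on_compact_if_locally_bounded:
  fixes F :: "'a::metric_space \<Rightarrow> real"
  assumes S: "compact S" and loc: "\<And>x. x \<in> S \<Longrightarrow> \<exists>e>0. \<exists>K. \<forall>y\<in>S. dist y x < e \<longrightarrow> \<bar>F y\<bar> \<le> K"
  shows "\<exists>K. \<forall>y\<in>S. \<bar>F y\<bar> \<le> K"
proof -
  obtain e K where eK: "\<And>x. x \<in> S \<Longrightarrow> e x > 0 \<and> (\<forall>y\<in>S. dist y x < e x \<longrightarrow> \<bar>F y\<bar> \<le> K x)"
    using loc by metis
  have "S \<subseteq> (\<Union>x\<in>S. ball x (e x))" using eK by force
  then obtain T where T: "T \<subseteq> S" "finite T" "S \<subseteq> (\<Union>x\<in>T. ball x (e x))"
    using compactE_image[OF S, of S "\<lambda>x. ball x (e x)"] by auto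
  have "\<bar>F y\<bar> \<le> Max (K ` T)" if y: "y \<in> S" for y
  proof -
    obtain x where x: "x \<in> T" "y \<in> ball x (e x)" using T y by auto
    then have "\<bar>F y\<bar> \<le> K x" using eK[of x] T y by (auto simp: dist_commute)
    also have "K x \<le> Max (K ` T)" using T x by (intro Max_ge) auto
    finally show ?thesis .
  qed
  then show ?thesis by blast
qed

lemma cadlag_locally_bounded:
  fixes F :: "real \<Rightarrow> real"
  assumes F: "cadlag_on t F" and x: "x \<in> {0..t}"
  shows "\<exists>e>0. \<exists>K. \<forall>y\<in>{0..t}. dist y x < e \<longrightarrow> \<bar>F y\<bar> \<le> K"
proof -
  have near_bound: "\<forall>\<^sub>F y in F'. \<bar>F y\<bar> \<le> \<bar>L\<bar> + 1" if "(F \<longlongrightarrow> L) F'" for F' L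
    using tendsto_iff[THEN iffD1, OF that, rule_format, of 1]
    by (auto elim!: eventually_mono simp: dist_real_def)
  obtain Kr where Kr: "\<forall>\<^sub>F y in at_right x. y \<in> {0..t} \<longrightarrow> \<bar>F y\<bar> \<le> Kr"
  proof (cases "x < t")
    case True
    then have "(F \<longlongrightarrow> F x) (at_right x)" using F x by (auto simp: cadlag_on_def)
    then show ?thesis using near_bound that by (blast intro: eventually_mono)
  next
    case False
    then show ?thesis using x eventually_at_right_less[of x]
      by (intro that[of 0]) (auto elim!: eventually_mono)
  qed
  obtain Kl where Kl: "\<forall>\<^sub>F y in at_left x. y \<in> {0..t} \<longrightarrow> \<bar>F y\<bar> \<le> Kl"
  proof (cases "0 < x")
    case True
    then have "x \<in> {0<..t}" using x by simp
    then obtain L where "(F \<longlongrightarrow> L) (at_left x)" using F unfolding cadlag_on_def by blast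
    then show ?thesis using near_bound that by (blast intro: eventually_mono)
  next
    case False
    moreover have "\<forall>\<^sub>F y in at_left x. y < x" by (simp add: eventually_at_filter)
    ultimately show ?thesis using x
      by (intro that[of 0]) (auto elim!: eventually_mono)
  qed
  define K where "K = max \<bar>F x\<bar> (max Kr Kl)"
  have "\<forall>\<^sub>F y in at x. y \<in> {0..t} \<longrightarrow> \<bar>F y\<bar> \<le> K"
    using Kr Kl by (auto simp: eventually_at_split K_def elim!: eventually_mono)
  then obtain e where "e > 0" and e: "\<forall>y. y \<noteq> x \<and> dist y x < e \<longrightarrow> y \<in> {0..t} \<longrightarrow> \<bar>F y\<bar> \<le> K"
    by (auto simp: eventually_at)
  have "\<bar>F y\<bar> \<le> K" if "y \<in> {0..t}" "dist y x < e" for y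
    using e that by (cases "y = x") (simp_all add: K_def)
  then have "\<forall>y\<in>{0..t}. dist y x < e \<longrightarrow> \<bar>F y\<bar> \<le> K" by blast
  with \<open>e > 0\<close> show ?thesis by blast
qed

lemma cadlag_bounded:
  fixes F :: "real \<Rightarrow> real"
  assumes t: "0 < t" and F: "cadlag_on t F"
  obtains K where "0 \<le> K" "\<And>y. y \<in> {0..t} \<Longrightarrow> \<bar>F y\<bar> \<le> K" "\<And>y. y \<in> {0..t} \<Longrightarrow> \<bar>leftlim F y\<bar> \<le> K"
proof -
  obtain K where K: "\<forall>y\<in>{0..t}. \<bar>F y\<bar> \<le> K"
    using bounded_on_compact_if_locally_bounded[of "{0..t}" F] cadlag_locally_bounded[OF F] by blast
  have "\<bar>leftlim F y\<bar> \<le> K" if y: "y \<in> {0..t}" for y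
  proof (cases "y \<le> 0")
    case True then show ?thesis using K t by (simp add: leftlim_def)
  next
    case False
    then have "y \<in> {0<..t}" using y by simp
    then obtain L where L: "(F \<longlongrightarrow> L) (at_left y)" using F unfolding cadlag_on_def by blast
    have "\<forall>\<^sub>F x in at_left y. \<bar>F x\<bar> \<le> K"
      unfolding eventually_at_left_field using False y K by (intro exI[of _ 0]) auto
    then have "\<bar>L\<bar> \<le> K"
      by (rule tendsto_upperbound[OF tendsto_rabs[OF L]]) simp
    then show ?thesis using False L by (simp add: leftlim_def tendsto_Lim)
  qed
  moreover have "0 \<le> K" using K t by (meson abs_ge_zero atLeastAtMost_iff less_imp_le order_trans order_refl)
  ultimately show ?thesis using that K by blast
qed

section \<open>The Sobolev space and its inner product\<close>

lemma square_integrable_lincomb: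
  fixes u v :: "real \<Rightarrow> real"
  assumes u: "borel_on {0..t} u" and v: "borel_on {0..t} v"
    and u2: "set_integrable lborel {0..t} (\<lambda>x. (u x)^2)" and v2: "set_integrable lborel {0..t} (\<lambda>x. (v x)^2)"
  shows "set_integrable lborel {0..t} (\<lambda>x. (a * u x + b * v x)^2)"
proof (rule set_integrable_bound)
  show "set_integrable lborel {0..t} (\<lambda>x. 2 * a^2 * (u x)^2 + 2 * b^2 * (v x)^2)"
    using u2 v2 by (intro set_integral_add(1) set_integrable_mult_right) auto
  obtain U V where [measurable]: "U \<in> borel_measurable borel" "V \<in> borel_measurable borel"
    and UV: "\<And>x. x \<in> {0..t} \<Longrightarrow> u x = U x" "\<And>x. x \<in> {0..t} \<Longrightarrow> v x = V x"
    using u v by (elim borel_onE) blast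
  have "borel_on {0..t} (\<lambda>x. (a * u x + b * v x)^2)"
    by (rule borel_onI[of "\<lambda>x. (a * U x + b * V x)^2"]) (auto simp: UV)
  then show "set_borel_measurable lborel {0..t} (\<lambda>x. (a * u x + b * v x)^2)"
    by (simp add: set_borel_measurable_interval_iff_borel_on)
  have "(a * x + b * y)^2 \<le> 2 * a^2 * x^2 + 2 * b^2 * y^2" for x y :: real
    using zero_le_power2[of "a * x - b * y"] by (simp add: power2_eq_square algebra_simps)
  then have "\<bar>(a * x + b * y)^2\<bar> \<le> \<bar>2 * a^2 * x^2 + 2 * b^2 * y^2\<bar>" for x y :: real
    by (simp add: order_trans[OF _ abs_ge_self])
  then show "AE x in lborel. x \<in> {0..t} \<longrightarrow>
      norm ((a * u x + b * v x)^2) \<le> norm (2 * a^2 * (u x)^2 + 2 * b^2 * (v x)^2)"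
    unfolding real_norm_def by (intro AE_I2 impI)
qed

lemma sob_derivsD:
  assumes "sob_derivs m t h d"
  shows "\<And>x. x \<in> {0..t} \<Longrightarrow> d 0 x = h x"
    and "\<And>k. k \<le> m \<Longrightarrow> borel_on {0..t} (d k)"
    and "\<And>k. k \<le> m \<Longrightarrow> set_integrable lborel {0..t} (\<lambda>x. (d k x)^2)"
    and "\<And>k. k \<le> m \<Longrightarrow> set_integrable lborel {0..t} (d k)"
    and "\<And>k x. k < m \<Longrightarrow> x \<in> {0..t} \<Longrightarrow> d k x = d k 0 + (LBINT u:{0..x}. d (Suc k) u)"
  using assms square_integrable_imp_set_integrable[of 0 t]
  unfolding sob_derivs_def set_borel_measurable_interval_iff_borel_on[symmetric]
  by blast+

lemma sob_derivs_lincomb: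
  assumes df: "sob_derivs m t f df" and dg: "sob_derivs m t g dg"
  shows "sob_derivs m t (\<lambda>x. a * f x + b * g x) (\<lambda>k x. a * df k x + b * dg k x)"
  unfolding sob_derivs_def
proof (intro conjI ballI allI impI)
  note F = sob_derivsD[OF df] and G = sob_derivsD[OF dg]
  show "a * df 0 x + b * dg 0 x = a * f x + b * g x" if "x \<in> {0..t}" for x
    using F(1) G(1) that by simp
  fix k
  assume k: "k \<le> m"
  obtain U V where [measurable]: "U \<in> borel_measurable borel" "V \<in> borel_measurable borel"
    and UV: "\<And>x. x \<in> {0..t} \<Longrightarrow> df k x = U x" "\<And>x. x \<in> {0..t} \<Longrightarrow> dg k x = V x"
    using F(2)[OF k] G(2)[OF k] by (elim borel_onE) blast
  have "borel_on {0..t} (\<lambda>x. a * df k x + b * dg k x)"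
    by (rule borel_onI[of "\<lambda>x. a * U x + b * V x"]) (auto simp: UV)
  then show "set_borel_measurable lborel {0..t} (\<lambda>x. a * df k x + b * dg k x)"
    by (simp add: set_borel_measurable_interval_iff_borel_on)
  show "set_integrable lborel {0..t} (\<lambda>x. (a * df k x + b * dg k x)^2)"
    by (rule square_integrable_lincomb[OF F(2)[OF k] G(2)[OF k] F(3)[OF k] G(3)[OF k]])
next
  note F = sob_derivsD[OF df] and G = sob_derivsD[OF dg]
  fix k x assume k: "k < m" and x: "x \<in> {0..t}"
  have "(LBINT u:{0..x}. a * df (Suc k) u + b * dg (Suc k) u)
      = a * (LBINT u:{0..x}. df (Suc k) u) + b * (LBINT u:{0..x}. dg (Suc k) u)"
    using k x set_integrable_subset_interval[OF F(4), of "Suc k" 0 x]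
      set_integrable_subset_interval[OF G(4), of "Suc k" 0 x]
    by (subst set_integral_add(2)) auto
  then show "a * df k x + b * dg k x
      = a * df k 0 + b * dg k 0 + (LBINT u:{0..x}. a * df (Suc k) u + b * dg (Suc k) u)"
    using F(5)[OF k x] G(5)[OF k x] by (simp add: algebra_simps)
qed

lemma sobolev_space_lincomb:
  "f \<in> sobolev_space m t \<Longrightarrow> g \<in> sobolev_space m t \<Longrightarrow> (\<lambda>x. a * f x + b * g x) \<in> sobolev_space m t"
  using sob_derivs_lincomb unfolding sobolev_space_def by fastforce

lemma sob_derivs_zero: "sob_derivs m t (\<lambda>x. 0) (\<lambda>k x. 0)"
  by (simp add: sob_derivs_def set_borel_measurable_def set_integrable_def)

lemma sobolev_space_zero: "(\<lambda>x. 0) \<in> sobolev_space m t"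
  unfolding sobolev_space_def using sob_derivs_zero by blast

lemma sobolev_space_sum:
  fixes n :: nat
  shows "(\<And>i. i < n \<Longrightarrow> psi i \<in> sobolev_space m t) \<Longrightarrow> (\<lambda>x. \<Sum>i<n. c i * psi i x) \<in> sobolev_space m t"
proof (induction n)
  case (Suc n)
  then have "(\<lambda>x. 1 * (\<Sum>i<n. c i * psi i x) + c n * psi n x) \<in> sobolev_space m t"
    by (intro sobolev_space_lincomb) auto
  then show ?case by simp
qed (simp add: sobolev_space_zero)

lemma sobolev_space_derivs:
  assumes "f \<in> sobolev_space m t"
  obtains d where "sob_derivs m t f d"
  using assms unfolding sobolev_space_def by blast

lemma sob_sqnorm_nonneg: "0 \<le> sob_sqnorm m t d"
  unfolding sob_sqnorm_def by (intro sum_nonneg set_integral_nonneg) simp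

lemma square_integral_le_sob_sqnorm: "k \<le> m \<Longrightarrow> (LBINT x:{0..t}. (d k x)^2) \<le> sob_sqnorm m t d"
  unfolding sob_sqnorm_def
  by (rule member_le_sum[where f="\<lambda>k. LBINT x:{0..t}. (d k x)^2"]) (auto intro: set_integral_nonneg)

locale sobolev_inner_product =
  fixes m :: nat and t :: real and ip :: "(real \<Rightarrow> real) \<Rightarrow> (real \<Rightarrow> real) \<Rightarrow> real"
  assumes t_pos: "0 < t" and m_pos: "1 \<le> m" and ip: "sobolev_ip m t ip"
begin

abbreviation W :: "(real \<Rightarrow> real) set" where "W \<equiv> sobolev_space m t"

abbreviation ip_norm :: "(real \<Rightarrow> real) \<Rightarrow> real" where "ip_norm f \<equiv> sqrt (ip f f)"

lemma ip_sym: "f \<in> W \<Longrightarrow> g \<in> W \<Longrightarrow> ip f g = ip g f"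
  using ip unfolding sobolev_ip_def by blast

lemma ip_lincomb_left:
  "f \<in> W \<Longrightarrow> g \<in> W \<Longrightarrow> h \<in> W \<Longrightarrow> ip (\<lambda>x. a * f x + b * g x) h = a * ip f h + b * ip g h"
  using ip unfolding sobolev_ip_def by blast

lemma ip_lincomb_right:
  assumes "f \<in> W" "g \<in> W" "h \<in> W"
  shows "ip h (\<lambda>x. a * f x + b * g x) = a * ip h f + b * ip h g"
proof -
  have "ip h (\<lambda>x. a * f x + b * g x) = ip (\<lambda>x. a * f x + b * g x) h"
    using assms by (intro ip_sym sobolev_space_lincomb)
  also have "\<dots> = a * ip f h + b * ip g h" using assms by (rule ip_lincomb_left)
  finally show ?thesis using assms ip_sym by simp
qed

lemma ip_zero_right: "f \<in> W \<Longrightarrow> ip f (\<lambda>x. 0) = 0"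
  using ip_lincomb_right[of f f f 0 0] by simp

lemma ip_coercive: "\<exists>c>0. \<forall>h\<in>W. \<forall>d. sob_derivs m t h d \<longrightarrow> c * sob_sqnorm m t d \<le> ip h h"
  using ip unfolding sobolev_ip_def by blast

lemma ip_nonneg:
  assumes f: "f \<in> W"
  shows "0 \<le> ip f f"
proof -
  obtain c where "c > 0" and c: "\<forall>h\<in>W. \<forall>d. sob_derivs m t h d \<longrightarrow> c * sob_sqnorm m t d \<le> ip h h"
    using ip_coercive by blast
  obtain d where "sob_derivs m t f d" using f by (rule sobolev_space_derivs)
  then have "c * sob_sqnorm m t d \<le> ip f f" using c f by blast
  moreover have "0 \<le> c * sob_sqnorm m t d" using \<open>c > 0\<close> sob_sqnorm_nonneg by simp
  ultimately show ?thesis by linarith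
qed

lemma ip_expand_diff:
  assumes f: "f \<in> W" and g: "g \<in> W"
  shows "ip (\<lambda>x. f x - c * g x) (\<lambda>x. f x - c * g x) = ip f f - 2 * c * ip f g + c^2 * ip g g"
proof -
  have fg: "(\<lambda>x. 1 * f x + (-c) * g x) \<in> W" using sobolev_space_lincomb[OF f g] .
  have "ip (\<lambda>x. 1 * f x + (-c) * g x) (\<lambda>x. 1 * f x + (-c) * g x)
      = ip f f - c * ip f g - c * (ip g f - c * ip g g)"
    using ip_lincomb_left[OF f g fg, of 1 "-c"] ip_lincomb_right[OF f g f, of 1 "-c"]
      ip_lincomb_right[OF f g g, of 1 "-c"] by simp
  then show ?thesis using ip_sym[OF f g] by (simp add: power2_eq_square algebra_simps)
qed

lemma ip_Cauchy_Schwarz: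
  assumes f: "f \<in> W" and g: "g \<in> W"
  shows "\<bar>ip f g\<bar> \<le> ip_norm f * ip_norm g"
proof -
  have q: "0 \<le> ip f f - 2 * c * ip f g + c^2 * ip g g" for c
    using ip_expand_diff[OF f g, of c] ip_nonneg[OF sobolev_space_lincomb[OF f g, of 1 "-c"]] by simp
  have "(ip f g)^2 \<le> ip f f * ip g g"
  proof (cases "ip g g = 0")
    case True
    have "ip f g = 0"
    proof (rule ccontr)
      assume "ip f g \<noteq> 0"
      then show False
        using q[of "(ip f f + 1) / (2 * ip f g)"] True by (simp add: field_simps)
    qed
    then show ?thesis using True by simp
  next
    case False
    then have gg: "0 < ip g g" using ip_nonneg[OF g] by simp
    have "0 \<le> ip f f - (ip f g)^2 / ip g g"
      using q[of "ip f g / ip g g"] gg by (simp add: power2_eq_square field_simps)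
    then show ?thesis using gg by (simp add: field_simps)
  qed
  then show ?thesis
    using real_sqrt_le_mono by (fastforce simp: real_sqrt_mult)
qed

lemma ip_norm_triangle:
  assumes f: "f \<in> W" and g: "g \<in> W"
  shows "ip_norm (\<lambda>x. f x + g x) \<le> ip_norm f + ip_norm g"
proof -
  have "ip (\<lambda>x. f x + g x) (\<lambda>x. f x + g x) = ip f f + 2 * ip f g + ip g g"
    using ip_expand_diff[OF f g, of "-1"] by simp
  also have "\<dots> \<le> (ip_norm f + ip_norm g)^2"
    using ip_Cauchy_Schwarz[OF f g] ip_nonneg[OF f] ip_nonneg[OF g]
    by (simp add: power2_eq_square algebra_simps)
  finally show ?thesis
    using ip_nonneg[OF f] ip_nonneg[OF g] real_sqrt_le_mono by fastforce
qed

lemma ip_norm_scale: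
  assumes f: "f \<in> W"
  shows "ip_norm (\<lambda>x. c * f x) = \<bar>c\<bar> * ip_norm f"
proof -
  have "ip (\<lambda>x. 0 - (- c) * f x) (\<lambda>x. 0 - (- c) * f x) = c^2 * ip f f"
    using ip_expand_diff[OF sobolev_space_zero f, of "-c"] ip_sym[OF sobolev_space_zero f]
      ip_zero_right[OF f] ip_zero_right[OF sobolev_space_zero] by simp
  then show ?thesis by (simp add: real_sqrt_mult)
qed

lemma ip_norm_add_scaled_le:
  assumes k: "k \<in> W" and D: "D \<in> W" and D_le: "ip_norm D \<le> r"
    and k_le: "ip_norm k \<le> a * r" and c: "0 \<le> c"
  shows "ip_norm (\<lambda>x. k x + c * D x) \<le> (a + c) * r"
proof -
  have "ip_norm (\<lambda>x. k x + c * D x) \<le> ip_norm k + c * ip_norm D"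
    using ip_norm_triangle[OF k sobolev_space_lincomb[OF D D, of c 0]] ip_norm_scale[OF D, of c] c
    by simp
  moreover have "c * ip_norm D \<le> c * r" using D_le c by (rule mult_left_mono)
  ultimately show ?thesis using k_le unfolding distrib_right by linarith
qed

lemma ip_norm_le_if_ip_self_le:
  assumes k: "k \<in> W" and le: "ip k k \<le> c * ip_norm k" and c: "0 \<le> c"
  shows "ip_norm k \<le> c"
proof (cases "ip_norm k = 0")
  case True
  then show ?thesis using c by simp
next
  case False
  then have "0 < ip_norm k" using ip_nonneg[OF k] by simp
  moreover have "ip_norm k * ip_norm k \<le> c * ip_norm k" using le ip_nonneg[OF k] by simp
  ultimately show ?thesis by (metis mult_right_le_imp_le)
qed

lemma sob_derivs_primitive:
  assumes d: "sob_derivs m t f d" and x: "x \<in> {0..t}"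
  shows "f x = d 0 0 + (LBINT u:{0..x}. d 1 u)"
  using sob_derivsD(5)[OF d, of 0 x] sob_derivsD(1)[OF d x] x m_pos by simp

lemma sob_derivs_integrable_derivative: "sob_derivs m t f d \<Longrightarrow> set_integrable lborel {0..t} (d 1)"
  using sob_derivsD(4)[of m t f d 1] m_pos by simp

lemma sob_derivs_L1_le:
  assumes d: "sob_derivs m t f d" and k: "k \<le> m"
  shows "(LBINT u:{0..t}. \<bar>d k u\<bar>) \<le> sqrt t * sqrt (sob_sqnorm m t d)"
proof -
  have "(LBINT u:{0..t}. \<bar>d k u\<bar>) \<le> sqrt (t * (LBINT x:{0..t}. (d k x)^2))"
    using sob_derivsD(2,3)[OF d k] t_pos
    by (intro set_integral_abs_le_sqrt_square) (simp_all add: set_borel_measurable_interval_iff_borel_on)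
  also have "\<dots> \<le> sqrt (t * sob_sqnorm m t d)"
    using square_integral_le_sob_sqnorm[OF k, of t d] t_pos by simp
  finally show ?thesis by (simp add: real_sqrt_mult)
qed

text \<open>Average the estimate \<open>\<bar>f x\<bar> \<le> \<bar>f y\<bar> + 2 \<parallel>f'\<parallel>\<^sub>1\<close> over \<open>y \<in> [0,t]\<close>.\<close>

lemma sob_derivs_sup_le:
  assumes d: "sob_derivs m t f d" and x: "x \<in> {0..t}"
  shows "\<bar>f x\<bar> \<le> (1 / sqrt t + 2 * sqrt t) * sqrt (sob_sqnorm m t d)"
proof -
  note F = sob_derivsD[OF d]
  define A0 where "A0 = (LBINT u:{0..t}. \<bar>d 0 u\<bar>)"
  define A1 where "A1 = (LBINT u:{0..t}. \<bar>d 1 u\<bar>)"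
  have primitive_le: "\<bar>LBINT u:{0..z}. d 1 u\<bar> \<le> A1" if z: "z \<in> {0..t}" for z
  proof -
    have int: "set_integrable lborel {0..t} (d 1)" by (rule sob_derivs_integrable_derivative[OF d])
    have "\<bar>LBINT u:{0..z}. d 1 u\<bar> \<le> (LBINT u:{0..z}. \<bar>d 1 u\<bar>)"
      using set_integral_norm_bound[OF set_integrable_subset_interval[OF int, of 0 z]] z by simp
    also have "\<dots> \<le> A1"
      unfolding A1_def using set_integrable_abs[OF int] z by (intro set_integral_le_of_subinterval) auto
    finally show ?thesis .
  qed
  have "\<bar>f x\<bar> \<le> \<bar>d 0 y\<bar> + 2 * A1" if y: "y \<in> {0..t}" for y
    using sob_derivs_primitive[OF d x] sob_derivs_primitive[OF d y] F(1)[OF y]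
      primitive_le[OF x] primitive_le[OF y] by linarith
  moreover have int0: "set_integrable lborel {0..t} (\<lambda>y. \<bar>d 0 y\<bar>)"
    using F(4)[OF le0] by (rule set_integrable_abs)
  ultimately have "(LBINT y:{0..t}. \<bar>f x\<bar>) \<le> (LBINT y:{0..t}. \<bar>d 0 y\<bar> + 2 * A1)"
    by (intro set_integral_mono) (auto intro: set_integrable_const_interval)
  also have "\<dots> = A0 + 2 * A1 * t"
    using int0 t_pos
    by (subst set_integral_add(2)) (auto intro: set_integrable_const_interval simp: set_integral_const A0_def)
  finally have "t * \<bar>f x\<bar> \<le> A0 + 2 * A1 * t"
    using t_pos by (simp add: set_integral_const)
  moreover have "A0 \<le> sqrt t * sqrt (sob_sqnorm m t d)" "A1 * t \<le> sqrt t * sqrt (sob_sqnorm m t d) * t"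
    using sob_derivs_L1_le[OF d le0] sob_derivs_L1_le[OF d m_pos] t_pos
    unfolding A0_def A1_def by (auto intro: mult_right_mono)
  ultimately have "t * \<bar>f x\<bar> \<le> sqrt t * sqrt (sob_sqnorm m t d) * (1 + 2 * t)"
    by (simp add: algebra_simps)
  also have "\<dots> = t * ((1 / sqrt t + 2 * sqrt t) * sqrt (sob_sqnorm m t d))"
    using t_pos by (simp add: field_simps)
  finally show ?thesis
    using t_pos by simp
qed

lemma sobolev_sup_le_ip_norm: "\<exists>K\<ge>0. \<forall>f\<in>W. \<forall>x. \<bar>f x\<bar> \<le> K * ip_norm f"
proof -
  obtain c where c: "c > 0" "\<forall>h\<in>W. \<forall>d. sob_derivs m t h d \<longrightarrow> c * sob_sqnorm m t d \<le> ip h h"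
    using ip_coercive by blast
  define K where "K = (1 / sqrt t + 2 * sqrt t) / sqrt c"
  have "\<bar>f x\<bar> \<le> K * ip_norm f" if f: "f \<in> W" for f x
  proof (cases "x \<in> {0..t}")
    case False
    then show ?thesis using f ip_nonneg[OF f] t_pos c by (simp add: sobolev_space_def K_def)
  next
    case True
    obtain d where d: "sob_derivs m t f d" using f by (rule sobolev_space_derivs)
    have "sqrt (sob_sqnorm m t d) \<le> ip_norm f / sqrt c"
      using c f d by (simp add: real_sqrt_divide[symmetric] field_simps mult.commute)
    then have "(1 / sqrt t + 2 * sqrt t) * sqrt (sob_sqnorm m t d) \<le> (1 / sqrt t + 2 * sqrt t) * (ip_norm f / sqrt c)"
      using t_pos by (intro mult_left_mono) auto
    then show ?thesis
      using sob_derivs_sup_le[OF d True] by (simp add: K_def)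
  qed
  moreover have "K \<ge> 0" using t_pos c by (simp add: K_def)
  ultimately show ?thesis by blast
qed

lemma derivative_L1_le_ip_norm:
  "\<exists>K\<ge>0. \<forall>f\<in>W. \<forall>d. sob_derivs m t f d \<longrightarrow> (LBINT u:{0..t}. \<bar>d 1 u\<bar>) \<le> K * ip_norm f"
proof -
  obtain c where c: "c > 0" "\<forall>h\<in>W. \<forall>d. sob_derivs m t h d \<longrightarrow> c * sob_sqnorm m t d \<le> ip h h"
    using ip_coercive by blast
  have "(LBINT u:{0..t}. \<bar>d 1 u\<bar>) \<le> sqrt t / sqrt c * ip_norm f"
    if f: "f \<in> W" and d: "sob_derivs m t f d" for f d
  proof -
    have "sqrt (sob_sqnorm m t d) \<le> ip_norm f / sqrt c"
      using c f d by (simp add: real_sqrt_divide[symmetric] field_simps mult.commute)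
    then have "sqrt t * sqrt (sob_sqnorm m t d) \<le> sqrt t * (ip_norm f / sqrt c)"
      using t_pos by (intro mult_left_mono) auto
    then show ?thesis
      using sob_derivs_L1_le[OF d, of 1] m_pos by simp
  qed
  moreover have "sqrt t / sqrt c \<ge> 0" using t_pos c by simp
  ultimately show ?thesis by blast
qed

lemma ip_self_eq_zero_imp: "f \<in> W \<Longrightarrow> ip f f = 0 \<Longrightarrow> f = (\<lambda>x. 0)"
  using sobolev_sup_le_ip_norm by fastforce

lemma wderiv_spec:
  assumes f: "f \<in> W"
  shows "borel_on {0..t} (wderiv t f)" and "set_integrable lborel {0..t} (wderiv t f)"
    and "\<And>x. x \<in> {0..t} \<Longrightarrow> f x = f 0 + (LBINT u:{0..x}. wderiv t f u)"
proof -
  obtain d where d: "sob_derivs m t f d" using f by (rule sobolev_space_derivs)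
  have f0: "f 0 = d 0 0" using sob_derivsD(1)[OF d, of 0] t_pos by simp
  have ex: "\<exists>g'. set_borel_measurable lborel {0..t} g' \<and> set_integrable lborel {0..t} g' \<and>
                 (\<forall>x\<in>{0..t}. f x = f 0 + (LBINT u:{0..x}. g' u))"
  proof (intro exI[of _ "d 1"] conjI ballI)
    show "set_borel_measurable lborel {0..t} (d 1)"
      using sob_derivsD(2)[OF d m_pos] by (simp add: set_borel_measurable_interval_iff_borel_on)
    show "set_integrable lborel {0..t} (d 1)" by (rule sob_derivs_integrable_derivative[OF d])
    show "f x = f 0 + (LBINT u:{0..x}. d 1 u)" if "x \<in> {0..t}" for x
      using sob_derivs_primitive[OF d that] f0 by simp
  qed
  have "set_borel_measurable lborel {0..t} (wderiv t f) \<and> set_integrable lborel {0..t} (wderiv t f) \<and>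
      (\<forall>x\<in>{0..t}. f x = f 0 + (LBINT u:{0..x}. wderiv t f u))"
    unfolding wderiv_def by (rule someI_ex[OF ex])
  then show "borel_on {0..t} (wderiv t f)" "set_integrable lborel {0..t} (wderiv t f)"
    "\<And>x. x \<in> {0..t} \<Longrightarrow> f x = f 0 + (LBINT u:{0..x}. wderiv t f u)"
    unfolding set_borel_measurable_interval_iff_borel_on by blast+
qed

lemma wderiv_AE_eq:
  assumes f: "f \<in> W" and d: "sob_derivs m t f d"
  shows "AE u in lborel. u \<in> {0..t} \<longrightarrow> wderiv t f u = d 1 u"
proof (rule AE_eq_on_interval_if_primitives_eq)
  show "0 \<le> t" using t_pos by simp
  show "set_integrable lborel {0..t} (wderiv t f)" "set_integrable lborel {0..t} (d 1)"
    using wderiv_spec(2)[OF f] sob_derivs_integrable_derivative[OF d] .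
  have "f 0 = d 0 0" using sob_derivsD(1)[OF d, of 0] t_pos by simp
  then show "(LBINT u:{0..x}. wderiv t f u) = (LBINT u:{0..x}. d 1 u)" if "x \<in> {0..t}" for x
    using wderiv_spec(3)[OF f that] sob_derivs_primitive[OF d that] by simp
qed

lemma ip_sum_right:
  fixes n :: nat and psi :: "nat \<Rightarrow> real \<Rightarrow> real"
  assumes psi: "\<forall>i<n. psi i \<in> W" and p: "p \<in> W"
  shows "ip p (\<lambda>x. \<Sum>i<n. c i * psi i x) = (\<Sum>i<n. c i * ip p (psi i))"
  using psi
proof (induction n)
  case 0
  then show ?case using ip_zero_right[OF p] by simp
next
  case (Suc n)
  have "ip p (\<lambda>x. 1 * (\<Sum>i<n. c i * psi i x) + c n * psi n x)
      = 1 * ip p (\<lambda>x. \<Sum>i<n. c i * psi i x) + c n * ip p (psi n)"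
    using Suc.prems p by (intro ip_lincomb_right sobolev_space_sum) auto
  then show ?case using Suc by simp
qed

lemma ip_orthogonal_sum_right:
  fixes n :: nat and psi :: "nat \<Rightarrow> real \<Rightarrow> real"
  assumes "\<forall>i<n. psi i \<in> W" "p \<in> W" "\<forall>i<n. ip p (psi i) = 0"
  shows "ip p (\<lambda>x. \<Sum>i<n. c i * psi i x) = 0"
  using ip_sum_right[OF assms(1,2)] assms(3) by simp

text \<open>One Gram--Schmidt step; if \<open>q\<close> has norm zero it vanishes and nothing is removed.\<close>

lemma ip_remove_component:
  assumes p: "p \<in> W" and q: "q \<in> W"
  defines "\<alpha> \<equiv> (if ip q q = 0 then 0 else ip p q / ip q q)"
  shows "ip (\<lambda>x. 1 * p x + (- \<alpha>) * q x) q = 0"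
proof -
  have "ip (\<lambda>x. 1 * p x + (- \<alpha>) * q x) q = ip p q - \<alpha> * ip q q"
    using ip_lincomb_left[OF p q q, of 1 "- \<alpha>"] by simp
  moreover have "ip p q = 0" if "ip q q = 0"
    using ip_self_eq_zero_imp[OF q that] ip_zero_right[OF p] by simp
  ultimately show ?thesis by (simp add: \<alpha>_def)
qed

lemma orth_decomposition_exists:
  fixes psi :: "nat \<Rightarrow> real \<Rightarrow> real" and n :: nat
  assumes "\<forall>i<n. psi i \<in> W" and "g \<in> W"
  shows "\<exists>p\<in>W. (\<forall>i<n. ip p (psi i) = 0) \<and> (\<exists>c. \<forall>x. g x - p x = (\<Sum>i<n. c i * psi i x))"
  using assms
proof (induction n arbitrary: g)
  case 0
  then show ?case by auto
next
  case (Suc n)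
  have psi: "\<forall>i<n. psi i \<in> W" "psi n \<in> W" using Suc.prems(1) by auto
  obtain p0 c0 where p0: "p0 \<in> W" "\<forall>i<n. ip p0 (psi i) = 0" "\<forall>x. g x - p0 x = (\<Sum>i<n. c0 i * psi i x)"
    using Suc.IH[OF psi(1) Suc.prems(2)] by blast
  obtain q cq where q: "q \<in> W" "\<forall>i<n. ip q (psi i) = 0" "\<forall>x. psi n x - q x = (\<Sum>i<n. cq i * psi i x)"
    using Suc.IH[OF psi] by blast
  define \<alpha> where "\<alpha> = (if ip q q = 0 then 0 else ip p0 q / ip q q)"
  define p where "p = (\<lambda>x. 1 * p0 x + (- \<alpha>) * q x)"
  have pW: "p \<in> W" unfolding p_def using p0(1) q(1) by (rule sobolev_space_lincomb)
  have orth_n: "\<forall>i<n. ip p (psi i) = 0"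
    unfolding p_def using ip_lincomb_left[OF p0(1) q(1), of _ 1 "- \<alpha>"] p0(2) q(2) psi(1) by simp
  have "psi n = (\<lambda>x. 1 * q x + 1 * (\<Sum>i<n. cq i * psi i x))"
    using q(3) by (auto simp: algebra_simps)
  moreover have "(\<lambda>x. \<Sum>i<n. cq i * psi i x) \<in> W" using psi(1) by (intro sobolev_space_sum) auto
  ultimately have "ip p (psi n) = ip p q + ip p (\<lambda>x. \<Sum>i<n. cq i * psi i x)"
    using ip_lincomb_right[OF q(1) _ pW, of _ 1 1] by simp
  also have "\<dots> = 0"
    using ip_remove_component[OF p0(1) q(1)] ip_orthogonal_sum_right[OF psi(1) pW orth_n]
    by (simp add: p_def \<alpha>_def)
  finally have "\<forall>i<Suc n. ip p (psi i) = 0" using orth_n less_Suc_eq by auto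
  moreover have "g x - p x = (\<Sum>i<Suc n. (if i < n then c0 i - \<alpha> * cq i else \<alpha>) * psi i x)" for x
  proof -
    have "psi n x - (\<Sum>i<n. cq i * psi i x) = q x" using q(3)[rule_format, of x] by linarith
    then have "g x - p x = (\<Sum>i<n. c0 i * psi i x) + \<alpha> * (psi n x - (\<Sum>i<n. cq i * psi i x))"
      using p0(3)[rule_format, of x] by (simp add: p_def)
    also have "\<dots> = (\<Sum>i<n. (c0 i - \<alpha> * cq i) * psi i x) + \<alpha> * psi n x"
      by (simp add: algebra_simps sum_subtractf sum_distrib_left)
    finally show ?thesis by simp
  qed
  ultimately show ?case
    using pW by (intro bexI[of _ p] conjI exI[of _ "\<lambda>i. if i < n then c0 i - \<alpha> * cq i else \<alpha>"]) auto
qed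

lemma orth_decomposition_unique:
  fixes psi :: "nat \<Rightarrow> real \<Rightarrow> real"
  assumes psi: "\<forall>i<l. psi i \<in> W"
    and p1: "p1 \<in> W" "\<forall>i<l. ip p1 (psi i) = 0" "\<forall>x. g x - p1 x = (\<Sum>i<l. c1 i * psi i x)"
    and p2: "p2 \<in> W" "\<forall>i<l. ip p2 (psi i) = 0" "\<forall>x. g x - p2 x = (\<Sum>i<l. c2 i * psi i x)"
  shows "p1 = p2"
proof -
  define D where "D = (\<lambda>x. 1 * p1 x + (-1) * p2 x)"
  have DW: "D \<in> W" unfolding D_def using p1(1) p2(1) by (rule sobolev_space_lincomb)
  have "\<forall>i<l. ip D (psi i) = 0"
    unfolding D_def using ip_lincomb_left[OF p1(1) p2(1), of _ 1 "-1"] p1(2) p2(2) psi by simp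
  then have "ip D (\<lambda>x. \<Sum>i<l. (c2 i - c1 i) * psi i x) = 0"
    by (rule ip_orthogonal_sum_right[OF psi DW])
  moreover have D_sum: "D = (\<lambda>x. \<Sum>i<l. (c2 i - c1 i) * psi i x)"
  proof
    fix x
    have "D x = (\<Sum>i<l. c2 i * psi i x) - (\<Sum>i<l. c1 i * psi i x)"
      using p1(3)[rule_format, of x] p2(3)[rule_format, of x] unfolding D_def by linarith
    then show "D x = (\<Sum>i<l. (c2 i - c1 i) * psi i x)"
      by (simp add: left_diff_distrib sum_subtractf)
  qed
  ultimately have "ip D D = 0" by (subst (2) D_sum)
  then have "D = (\<lambda>x. 0)" by (rule ip_self_eq_zero_imp[OF DW])
  then show ?thesis
    unfolding D_def fun_eq_iff by simp
qed

lemma orth_proj_spec: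
  fixes psi :: "nat \<Rightarrow> real \<Rightarrow> real"
  assumes psi: "\<forall>i<l. psi i \<in> W" and g: "g \<in> W"
  shows "orth_proj m t ip psi l g \<in> W" and "\<forall>i<l. ip (orth_proj m t ip psi l g) (psi i) = 0"
    and "\<exists>c. \<forall>x. g x - orth_proj m t ip psi l g x = (\<Sum>i<l. c i * psi i x)"
proof -
  have "\<exists>!p. p \<in> W \<and> (\<forall>i<l. ip p (psi i) = 0) \<and> (\<exists>c. \<forall>x. g x - p x = (\<Sum>i<l. c i * psi i x))"
    using orth_decomposition_exists[OF psi g] orth_decomposition_unique[OF psi] by blast
  from theI'[OF this] show "orth_proj m t ip psi l g \<in> W" "\<forall>i<l. ip (orth_proj m t ip psi l g) (psi i) = 0"
    "\<exists>c. \<forall>x. g x - orth_proj m t ip psi l g x = (\<Sum>i<l. c i * psi i x)"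
    unfolding orth_proj_def by blast+
qed

text \<open>\<open>g - h\<close> is the difference of the projections plus an element of the span, and the two
  are orthogonal.\<close>

lemma orth_proj_nonexpansive:
  fixes psi :: "nat \<Rightarrow> real \<Rightarrow> real"
  assumes psi: "\<forall>i<l. psi i \<in> W" and g: "g \<in> W" and h: "h \<in> W"
  defines "D \<equiv> (\<lambda>x. orth_proj m t ip psi l g x - orth_proj m t ip psi l h x)"
  shows "D \<in> W" and "ip_norm D \<le> ip_norm (\<lambda>x. g x - h x)"
proof -
  note G = orth_proj_spec[OF psi g] and H = orth_proj_spec[OF psi h]
  obtain cg ch where cg: "\<forall>x. g x - orth_proj m t ip psi l g x = (\<Sum>i<l. cg i * psi i x)"
    and ch: "\<forall>x. h x - orth_proj m t ip psi l h x = (\<Sum>i<l. ch i * psi i x)"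
    using G(3) H(3) by blast
  have D_eq: "D = (\<lambda>x. 1 * orth_proj m t ip psi l g x + (-1) * orth_proj m t ip psi l h x)"
    unfolding D_def by simp
  show DW: "D \<in> W" unfolding D_eq using G(1) H(1) by (rule sobolev_space_lincomb)
  have orth: "\<forall>i<l. ip D (psi i) = 0"
    unfolding D_eq using ip_lincomb_left[OF G(1) H(1), of _ 1 "-1"] G(2) H(2) psi by simp
  define S where "S = (\<lambda>x. \<Sum>i<l. (cg i - ch i) * psi i x)"
  have SW: "S \<in> W" unfolding S_def using psi by (intro sobolev_space_sum) auto
  have ghW: "(\<lambda>x. g x - h x) \<in> W" using sobolev_space_lincomb[OF g h, of 1 "-1"] by simp
  have gh: "(\<lambda>x. g x - h x) = (\<lambda>x. 1 * D x + 1 * S x)"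
  proof
    fix x
    have "S x = (\<Sum>i<l. cg i * psi i x) - (\<Sum>i<l. ch i * psi i x)"
      by (simp add: S_def left_diff_distrib sum_subtractf)
    then show "g x - h x = 1 * D x + 1 * S x"
      using cg[rule_format, of x] ch[rule_format, of x] unfolding D_def mult_1 by linarith
  qed
  have "ip D (\<lambda>x. g x - h x) = ip D D + ip D S"
    using ip_lincomb_right[OF DW SW DW, of 1 1] unfolding gh by simp
  also have "ip D S = 0"
    unfolding S_def by (rule ip_orthogonal_sum_right[OF psi DW orth])
  finally have "ip D D = ip D (\<lambda>x. g x - h x)" by simp
  also have "\<dots> \<le> ip_norm D * ip_norm (\<lambda>x. g x - h x)"
    using ip_Cauchy_Schwarz[OF DW ghW] by (rule order_trans[OF abs_ge_self])
  finally have le: "ip_norm D * ip_norm D \<le> ip_norm D * ip_norm (\<lambda>x. g x - h x)"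
    using ip_nonneg[OF DW] by (simp only: real_sqrt_mult_self)
  show "ip_norm D \<le> ip_norm (\<lambda>x. g x - h x)"
  proof (cases "ip_norm D = 0")
    case True
    then show ?thesis using ip_nonneg[OF ghW] by simp
  next
    case False
    then have "0 < ip_norm D" using ip_nonneg[OF DW] by simp
    with le show ?thesis by (rule mult_left_le_imp_le)
  qed
qed

end

section \<open>The pathwise integral\<close>

locale cadlag_integrator = sobolev_inner_product +
  fixes Z :: "real \<Rightarrow> real"
  assumes Z_cadlag: "cadlag_on t Z"
begin

lemma leftlim_Z_borel_on: "borel_on {0..t} (leftlim Z)"
  using leftlim_borel_on[OF Z_cadlag] .

lemma borel_on_conv:
  assumes w: "borel_on {0..t} w" and s: "s \<in> {0..t}"
  shows "borel_on {0..s} (\<lambda>u. leftlim Z (s - u) * w u)"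
proof -
  obtain G V where [measurable]: "G \<in> borel_measurable borel" "V \<in> borel_measurable borel"
    and GV: "\<And>x. x \<in> {0..t} \<Longrightarrow> leftlim Z x = G x" "\<And>x. x \<in> {0..t} \<Longrightarrow> w x = V x"
    using leftlim_Z_borel_on w unfolding borel_on_def by metis
  show ?thesis
    by (rule borel_onI[of "\<lambda>u. G (s - u) * V u"]) (use s in \<open>auto simp: GV\<close>)
qed

lemma set_integrable_conv:
  assumes w: "borel_on {0..t} w" "set_integrable lborel {0..t} w" and s: "s \<in> {0..t}"
  shows "set_integrable lborel {0..s} (\<lambda>u. leftlim Z (s - u) * w u)"
proof -
  obtain K where K: "\<And>y. y \<in> {0..t} \<Longrightarrow> \<bar>leftlim Z y\<bar> \<le> K"
    using cadlag_bounded[OF t_pos Z_cadlag] by metis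
  show ?thesis
  proof (rule set_integrable_bound)
    show "set_integrable lborel {0..s} (\<lambda>u. K * w u)"
      using set_integrable_subset_interval[OF w(2), of 0 s] s by auto
    show "set_borel_measurable lborel {0..s} (\<lambda>u. leftlim Z (s - u) * w u)"
      using borel_on_conv[OF w(1) s] by (simp add: set_borel_measurable_interval_iff_borel_on)
    have "\<bar>leftlim Z (s - u) * w u\<bar> \<le> \<bar>K * w u\<bar>" if "u \<in> {0..s}" for u
      using K[of "s - u"] that s by (auto simp: abs_mult intro: mult_right_mono order_trans[OF _ abs_ge_self])
    then show "AE u in lborel. u \<in> {0..s} \<longrightarrow> norm (leftlim Z (s - u) * w u) \<le> norm (K * w u)"
      by auto
  qed
qed

text \<open>The substitution \<open>u \<mapsto> s - u\<close>, together with the a.e. agreement of \<open>wderiv t f\<close> with any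
  derivative witness, gives the convolution form.\<close>

lemma Xminus_eq:
  assumes f: "f \<in> W" and d: "sob_derivs m t f d" and s: "s \<in> {0..t}"
  shows "Xminus t Z f s = f 0 * leftlim Z s - f s * Z 0 + (LBINT u:{0..s}. leftlim Z (s - u) * d 1 u)"
proof -
  have "(LBINT u:{0..s}. leftlim Z u * - wderiv t f (s - u))
      = (LBINT u:{0..s}. (-1) * (leftlim Z u * wderiv t f (s - u)))"
    by simp
  also have "\<dots> = - (LBINT u:{0..s}. leftlim Z u * wderiv t f (s - u))"
    by (subst set_integral_mult_right) simp
  also have "(LBINT u:{0..s}. leftlim Z u * wderiv t f (s - u)) = (LBINT u:{0..s}. leftlim Z (s - u) * wderiv t f u)"
    using set_integral_reflect_interval[of s "\<lambda>u. leftlim Z (s - u) * wderiv t f u"] by simp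
  also have "(LBINT u:{0..s}. leftlim Z (s - u) * wderiv t f u) = (LBINT u:{0..s}. leftlim Z (s - u) * d 1 u)"
  proof (rule set_integral_cong_AE_borel_on)
    show "borel_on {0..s} (\<lambda>u. leftlim Z (s - u) * wderiv t f u)"
      using borel_on_conv[OF wderiv_spec(1)[OF f] s] .
    show "borel_on {0..s} (\<lambda>u. leftlim Z (s - u) * d 1 u)"
      using borel_on_conv[OF sob_derivsD(2)[OF d, of 1] s] m_pos by simp
    show "AE x in lborel. x \<in> {0..s} \<longrightarrow> leftlim Z (s - x) * wderiv t f x = leftlim Z (s - x) * d 1 x"
      using wderiv_AE_eq[OF f d] by (rule eventually_mono) (use s in auto)
  qed simp
  finally show ?thesis unfolding Xminus_def pw_int_def by simp
qed

lemma Xminus_lincomb: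
  assumes f: "f \<in> W" and g: "g \<in> W" and s: "s \<in> {0..t}"
  shows "Xminus t Z (\<lambda>x. a * f x + b * g x) s = a * Xminus t Z f s + b * Xminus t Z g s"
proof -
  obtain df dg where df: "sob_derivs m t f df" and dg: "sob_derivs m t g dg"
    using f g by (metis sobolev_space_derivs)
  have int: "set_integrable lborel {0..s} (\<lambda>u. leftlim Z (s - u) * df 1 u)"
    "set_integrable lborel {0..s} (\<lambda>u. leftlim Z (s - u) * dg 1 u)"
    using sob_derivsD(2)[OF df, of 1] sob_derivsD(2)[OF dg, of 1] m_pos
      sob_derivs_integrable_derivative[OF df] sob_derivs_integrable_derivative[OF dg]
    by (auto intro!: set_integrable_conv s)
  have "(LBINT u:{0..s}. leftlim Z (s - u) * (a * df 1 u + b * dg 1 u))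
      = (LBINT u:{0..s}. a * (leftlim Z (s - u) * df 1 u) + b * (leftlim Z (s - u) * dg 1 u))"
    by (simp add: algebra_simps)
  also have "\<dots> = a * (LBINT u:{0..s}. leftlim Z (s - u) * df 1 u) + b * (LBINT u:{0..s}. leftlim Z (s - u) * dg 1 u)"
    using int by (subst set_integral_add(2)) auto
  finally show ?thesis
    unfolding Xminus_eq[OF f df s] Xminus_eq[OF g dg s]
      Xminus_eq[OF sobolev_space_lincomb[OF f g, of a b] sob_derivs_lincomb[OF df dg, of a b] s]
    by (simp add: algebra_simps)
qed

lemma Xminus_bounded: "\<exists>K\<ge>0. \<forall>f\<in>W. \<forall>s\<in>{0..t}. \<bar>Xminus t Z f s\<bar> \<le> K * ip_norm f"
proof -
  obtain KZ where KZ: "0 \<le> KZ" "\<And>y. y \<in> {0..t} \<Longrightarrow> \<bar>Z y\<bar> \<le> KZ" "\<And>y. y \<in> {0..t} \<Longrightarrow> \<bar>leftlim Z y\<bar> \<le> KZ"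
    using cadlag_bounded[OF t_pos Z_cadlag] by metis
  obtain Ke where Ke: "Ke \<ge> 0" "\<forall>f\<in>W. \<forall>x. \<bar>f x\<bar> \<le> Ke * ip_norm f"
    using sobolev_sup_le_ip_norm by blast
  obtain Kd where Kd: "Kd \<ge> 0" "\<forall>f\<in>W. \<forall>d. sob_derivs m t f d \<longrightarrow> (LBINT u:{0..t}. \<bar>d 1 u\<bar>) \<le> Kd * ip_norm f"
    using derivative_L1_le_ip_norm by blast
  have "\<bar>Xminus t Z f s\<bar> \<le> (KZ * (2 * Ke + Kd)) * ip_norm f" if f: "f \<in> W" and s: "s \<in> {0..t}" for f s
  proof -
    obtain d where d: "sob_derivs m t f d" using f by (rule sobolev_space_derivs)
    have d1: "set_integrable lborel {0..t} (d 1)" by (rule sob_derivs_integrable_derivative[OF d])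
    have int: "set_integrable lborel {0..s} (\<lambda>u. leftlim Z (s - u) * d 1 u)"
      using sob_derivsD(2)[OF d, of 1] m_pos d1 s by (intro set_integrable_conv) auto
    have "\<bar>LBINT u:{0..s}. leftlim Z (s - u) * d 1 u\<bar> \<le> (LBINT u:{0..s}. \<bar>leftlim Z (s - u) * d 1 u\<bar>)"
      using set_integral_norm_bound[OF int] by simp
    also have "\<dots> \<le> (LBINT u:{0..s}. KZ * \<bar>d 1 u\<bar>)"
    proof (rule set_integral_mono)
      show "set_integrable lborel {0..s} (\<lambda>u. \<bar>leftlim Z (s - u) * d 1 u\<bar>)"
        using int by (rule set_integrable_abs)
      show "set_integrable lborel {0..s} (\<lambda>u. KZ * \<bar>d 1 u\<bar>)"
        using set_integrable_abs[OF set_integrable_subset_interval[OF d1, of 0 s]] s by simp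
      show "\<bar>leftlim Z (s - u) * d 1 u\<bar> \<le> KZ * \<bar>d 1 u\<bar>" if "u \<in> {0..s}" for u
        using KZ(3)[of "s - u"] that s by (simp add: abs_mult mult_right_mono)
    qed
    also have "\<dots> \<le> KZ * (LBINT u:{0..t}. \<bar>d 1 u\<bar>)"
      using KZ(1) s set_integrable_abs[OF d1]
      by (auto intro!: mult_left_mono set_integral_le_of_subinterval)
    also have "\<dots> \<le> KZ * (Kd * ip_norm f)" using Kd f d KZ(1) by (intro mult_left_mono) auto
    finally have conv: "\<bar>LBINT u:{0..s}. leftlim Z (s - u) * d 1 u\<bar> \<le> KZ * (Kd * ip_norm f)" .
    have "\<bar>f 0 * leftlim Z s\<bar> \<le> (Ke * ip_norm f) * KZ" "\<bar>f s * Z 0\<bar> \<le> (Ke * ip_norm f) * KZ"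
      unfolding abs_mult using Ke KZ s f t_pos ip_nonneg[OF f] by (auto intro!: mult_mono)
    then show ?thesis
      using Xminus_eq[OF f d s] conv by (simp add: algebra_simps abs_le_iff)
  qed
  moreover have "KZ * (2 * Ke + Kd) \<ge> 0" using KZ Ke Kd by simp
  ultimately show ?thesis by blast
qed

definition Xminus_bound :: real where
  "Xminus_bound = (SOME K. 0 \<le> K \<and> (\<forall>f\<in>W. \<forall>s\<in>{0..t}. \<bar>Xminus t Z f s\<bar> \<le> K * ip_norm f))"

lemma Xminus_bound: "0 \<le> Xminus_bound" "f \<in> W \<Longrightarrow> s \<in> {0..t} \<Longrightarrow> \<bar>Xminus t Z f s\<bar> \<le> Xminus_bound * ip_norm f"
proof -
  have "0 \<le> Xminus_bound \<and> (\<forall>f\<in>W. \<forall>s\<in>{0..t}. \<bar>Xminus t Z f s\<bar> \<le> Xminus_bound * ip_norm f)"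
    unfolding Xminus_bound_def by (rule someI_ex[OF Xminus_bounded])
  then show "0 \<le> Xminus_bound" "f \<in> W \<Longrightarrow> s \<in> {0..t} \<Longrightarrow> \<bar>Xminus t Z f s\<bar> \<le> Xminus_bound * ip_norm f"
    by blast+
qed

lemma Xminus_borel_on:
  assumes f: "f \<in> W"
  shows "borel_on {0..t} (Xminus t Z f)"
proof -
  obtain d where d: "sob_derivs m t f d" using f by (rule sobolev_space_derivs)
  obtain G D F where [measurable]: "G \<in> borel_measurable borel" "D \<in> borel_measurable borel" "F \<in> borel_measurable borel"
    and GDF: "\<And>x. x \<in> {0..t} \<Longrightarrow> leftlim Z x = G x" "\<And>x. x \<in> {0..t} \<Longrightarrow> d 1 x = D x"
      "\<And>x. x \<in> {0..t} \<Longrightarrow> d 0 x = F x"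
    using leftlim_Z_borel_on sob_derivsD(2)[OF d, of 1] sob_derivsD(2)[OF d, of 0] m_pos
    unfolding borel_on_def by (metis le0)
  define C where "C s = (\<integral>u. indicator {0..s} u * (G (s - u) * D u) \<partial>lborel)" for s
  have "(\<lambda>(s, u). indicator {0..s} u * (G (s - u) * D u)) \<in> borel_measurable (lborel \<Otimes>\<^sub>M lborel)"
    by (simp add: indicator_def) measurable
  then have [measurable]: "C \<in> borel_measurable borel"
    unfolding C_def using lborel.borel_measurable_lebesgue_integral by fastforce
  have "Xminus t Z f s = F 0 * G s - F s * Z 0 + C s" if s: "s \<in> {0..t}" for s
  proof -
    have "indicator {0..s} u *\<^sub>R (leftlim Z (s - u) * d 1 u) = indicator {0..s} u * (G (s - u) * D u)" for u
    proof (cases "u \<in> {0..s}")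
      case True
      then have "u \<in> {0..t}" "s - u \<in> {0..t}" using s by auto
      then show ?thesis using True GDF(1)[of "s - u"] GDF(2)[of u] by simp
    qed simp
    then have "(LBINT u:{0..s}. leftlim Z (s - u) * d 1 u) = C s"
      unfolding C_def set_lebesgue_integral_def by (intro Bochner_Integration.integral_cong) auto
    moreover have "f 0 = F 0" "f s = F s" using sob_derivsD(1)[OF d] GDF(3) s t_pos by auto
    ultimately show ?thesis using Xminus_eq[OF f d s] GDF(1)[OF s] by simp
  qed
  then show ?thesis by (intro borel_onI[of "\<lambda>s. F 0 * G s - F s * Z 0 + C s"]) auto
qed

end

section \<open>Second differences of the likelihood\<close>

lemma abs_diff_le_of_deriv_bound:
  fixes f f' :: "real \<Rightarrow> real"
  assumes der: "\<And>z. (f has_real_derivative f' z) (at z)"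
    and bound: "\<And>z. min a b \<le> z \<Longrightarrow> z \<le> max a b \<Longrightarrow> \<bar>f' z\<bar> \<le> B"
  shows "\<bar>f b - f a\<bar> \<le> B * \<bar>b - a\<bar>"
proof -
  have *: "\<bar>f y - f x\<bar> \<le> B * \<bar>y - x\<bar>" if "x < y" "\<And>z. x \<le> z \<Longrightarrow> z \<le> y \<Longrightarrow> \<bar>f' z\<bar> \<le> B" for x y
  proof -
    obtain z where z: "x < z" "z < y" "f y - f x = (y - x) * f' z"
      using MVT2[OF \<open>x < y\<close>, of f f'] der by blast
    have "\<bar>f y - f x\<bar> = \<bar>y - x\<bar> * \<bar>f' z\<bar>" using z(3) by (simp add: abs_mult)
    also have "\<dots> \<le> \<bar>y - x\<bar> * B" using that(2)[of z] z by (intro mult_left_mono) auto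
    finally show ?thesis by (simp add: mult.commute)
  qed
  consider "a < b" | "a = b" | "b < a" by linarith
  then show ?thesis
    using *[of a b] *[of b a] bound by cases (auto simp: abs_minus_commute)
qed

text \<open>The mixed second difference of a \<open>C\<^sup>2\<close> function is controlled by \<open>sup \<bar>q''\<bar>\<close>:
  apply the mean value inequality to \<open>z \<mapsto> q (z + e) - q z\<close> and then to \<open>q'\<close>.\<close>

lemma second_difference_bound:
  fixes q q' q'' :: "real \<Rightarrow> real"
  assumes d1: "\<And>x. (q has_real_derivative q' x) (at x)"
    and d2: "\<And>x. (q' has_real_derivative q'' x) (at x)"
    and K: "\<And>z. \<bar>z\<bar> \<le> r + 1 \<Longrightarrow> \<bar>q'' z\<bar> \<le> K"
    and x: "\<bar>x\<bar> \<le> r" and y: "\<bar>y\<bar> \<le> r" and e: "\<bar>e\<bar> \<le> 1"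
  shows "\<bar>q (x + e) - q x - q (y + e) + q y\<bar> \<le> K * \<bar>e\<bar> * \<bar>x - y\<bar>"
proof -
  have du: "((\<lambda>z. q (z + e) - q z) has_real_derivative q' (z + e) - q' z) (at z)" for z
    by (rule derivative_eq_intros DERIV_chain2[OF d1] d1 | simp)+
  have "\<bar>q' (z + e) - q' z\<bar> \<le> K * \<bar>e\<bar>" if "min x y \<le> z" "z \<le> max x y" for z
  proof -
    have "\<bar>w\<bar> \<le> r + 1" if "min z (z + e) \<le> w" "w \<le> max z (z + e)" for w
      using that \<open>min x y \<le> z\<close> \<open>z \<le> max x y\<close> x y e by (auto simp: abs_le_iff)
    then show ?thesis using abs_diff_le_of_deriv_bound[OF d2, of z "z + e" K] K by simp
  qed
  then have "\<bar>(q (x + e) - q x) - (q (y + e) - q y)\<bar> \<le> (K * \<bar>e\<bar>) * \<bar>x - y\<bar>"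
    using abs_diff_le_of_deriv_bound[OF du, of y x "K * \<bar>e\<bar>"] by (simp add: min.commute max.commute)
  then show ?thesis by (simp add: algebra_simps)
qed

lemma deriv_diff_le_if_increment_bound:
  fixes u v :: "real \<Rightarrow> real"
  assumes u: "(u has_real_derivative u') (at 0)" and v: "(v has_real_derivative v') (at 0)"
    and bound: "\<forall>\<^sub>F e in at 0. \<bar>(u e - u 0) - (v e - v 0)\<bar> \<le> \<bar>e\<bar> * B"
  shows "\<bar>u' - v'\<bar> \<le> B"
proof (rule tendsto_upperbound[OF tendsto_rabs[OF tendsto_diff[OF u[unfolded DERIV_def] v[unfolded DERIV_def]]]])
  have "\<forall>\<^sub>F e in at (0::real). e \<noteq> 0" by (simp add: eventually_at_filter)
  with bound show "\<forall>\<^sub>F e in at 0. \<bar>(u (0 + e) - u 0) / e - (v (0 + e) - v 0) / e\<bar> \<le> B"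
    by eventually_elim (simp add: diff_divide_distrib[symmetric] abs_divide field_simps)
qed simp

definition second_diff :: "((real \<Rightarrow> real) \<Rightarrow> real) \<Rightarrow> (real \<Rightarrow> real) \<Rightarrow> (real \<Rightarrow> real) \<Rightarrow> (real \<Rightarrow> real) \<Rightarrow> real \<Rightarrow> real" where
  "second_diff F g h k e = (F (\<lambda>x. g x + e * k x) - F g) - (F (\<lambda>x. h x + e * k x) - F h)"

lemma second_diff_diff: "second_diff (\<lambda>f. A f - B f) g h k e = second_diff A g h k e - second_diff B g h k e"
  by (simp add: second_diff_def algebra_simps)

lemma second_diff_sum:
  "second_diff (\<lambda>f. \<Sum>\<tau>\<in>J. A f \<tau>) g h k e = (\<Sum>\<tau>\<in>J. second_diff (\<lambda>f. A f \<tau>) g h k e)"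
  by (simp add: second_diff_def sum_subtractf)

locale log_likelihood = cadlag_integrator +
  fixes phi Y :: "real \<Rightarrow> real" and J :: "real set" and phi' phi'' :: "real \<Rightarrow> real"
  assumes phi_pos: "\<forall>x. 0 < phi x"
    and phi_deriv: "\<forall>x. (phi has_real_derivative phi' x) (at x)"
    and phi'_deriv: "\<forall>x. (phi' has_real_derivative phi'' x) (at x)"
    and phi''_continuous: "continuous_on UNIV phi''"
    and Y_cadlag: "cadlag_on t Y" and J_finite: "finite J" and J_subset: "J \<subseteq> {0<..t}"
    and Y_jump_pos: "\<forall>\<tau>\<in>J. 0 < Y \<tau>"
begin

lemma phi_continuous: "continuous_on UNIV phi"
  using phi_deriv by (intro continuous_at_imp_continuous_on) (auto intro: DERIV_isCont)

lemma phi'_continuous: "continuous_on UNIV phi'"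
  using phi'_deriv by (intro continuous_at_imp_continuous_on) (auto intro: DERIV_isCont)

lemma phi_nonzero: "phi x \<noteq> 0"
  using phi_pos by (metis less_irrefl)

lemma Y_bounded: "\<exists>KY\<ge>0. \<forall>s\<in>{0..t}. \<bar>Y s\<bar> \<le> KY"
  using cadlag_bounded[OF t_pos Y_cadlag] by metis

lemma intensity_integrable:
  assumes f: "f \<in> W"
  shows "set_integrable lborel {0..t} (\<lambda>s. Y s * phi (Xminus t Z f s))"
proof -
  obtain YY XX where [measurable]: "YY \<in> borel_measurable borel" "XX \<in> borel_measurable borel"
    and YX: "\<And>x. x \<in> {0..t} \<Longrightarrow> Y x = YY x" "\<And>x. x \<in> {0..t} \<Longrightarrow> Xminus t Z f x = XX x"
    using cadlag_borel_on[OF Y_cadlag] Xminus_borel_on[OF f] by (elim borel_onE) blast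
  have [measurable]: "phi \<in> borel_measurable borel"
    by (rule borel_measurable_continuous_onI[OF phi_continuous])
  define r where "r = Xminus_bound * ip_norm f"
  obtain KP where KP: "\<And>x. x \<in> {-r..r} \<Longrightarrow> norm (phi x) \<le> KP"
    using continuous_on_compact_bound[OF compact_Icc continuous_on_subset[OF phi_continuous]] by blast
  obtain KY where KY: "0 \<le> KY" "\<And>s. s \<in> {0..t} \<Longrightarrow> \<bar>Y s\<bar> \<le> KY"
    using Y_bounded by blast
  show ?thesis
  proof (rule set_integrable_bound[OF set_integrable_const_interval[of 0 t "KY * KP"]])
    have "borel_on {0..t} (\<lambda>s. Y s * phi (Xminus t Z f s))"
      by (rule borel_onI[of "\<lambda>s. YY s * phi (XX s)"]) (auto simp: YX)
    then show "set_borel_measurable lborel {0..t} (\<lambda>s. Y s * phi (Xminus t Z f s))"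
      by (simp add: set_borel_measurable_interval_iff_borel_on)
    have "\<bar>Y s * phi (Xminus t Z f s)\<bar> \<le> KY * KP" if s: "s \<in> {0..t}" for s
    proof -
      have "Xminus t Z f s \<in> {-r..r}" using Xminus_bound(2)[OF f s] by (simp add: r_def abs_le_iff)
      then show ?thesis unfolding abs_mult using KP KY s by (intro mult_mono) auto
    qed
    then show "AE s in lborel. s \<in> {0..t} \<longrightarrow> norm (Y s * phi (Xminus t Z f s)) \<le> norm (KY * KP)"
      by (auto intro: order_trans[OF _ abs_ge_self])
  qed
qed

definition log_phi' :: "real \<Rightarrow> real" where "log_phi' x = phi' x / phi x"

definition log_phi'' :: "real \<Rightarrow> real" where
  "log_phi'' x = (phi'' x * phi x - phi' x * phi' x) / (phi x)^2"

lemma ln_phi_deriv: "((\<lambda>x. ln (phi x)) has_real_derivative log_phi' x) (at x)"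
  using DERIV_chain2[OF DERIV_ln_divide, of phi x "phi' x"] phi_pos phi_deriv
  by (simp add: log_phi'_def)

lemma log_phi'_deriv: "(log_phi' has_real_derivative log_phi'' x) (at x)"
proof -
  have "((\<lambda>x. phi' x / phi x) has_real_derivative (phi'' x * phi x - phi' x * phi' x) / (phi x * phi x)) (at x)"
    using phi_deriv phi'_deriv phi_nonzero by (intro DERIV_divide) auto
  then show ?thesis by (simp add: log_phi'_def[abs_def] log_phi''_def power2_eq_square)
qed

lemma log_phi''_continuous: "continuous_on UNIV log_phi''"
  unfolding log_phi''_def[abs_def] using phi''_continuous phi_continuous phi'_continuous phi_nonzero
  by (intro continuous_intros) auto

lemma loglik_eq:
  "loglik phi Y Z J t f = (LBINT s:{0..t}. Y s * phi (Xminus t Z f s)) - (\<Sum>\<tau>\<in>J. ln (Y \<tau>))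
     - (\<Sum>\<tau>\<in>J. ln (phi (Xminus t Z f \<tau>)))"
proof -
  have "(\<Sum>\<tau>\<in>J. ln (Y \<tau> * phi (Xminus t Z f \<tau>))) = (\<Sum>\<tau>\<in>J. ln (Y \<tau>) + ln (phi (Xminus t Z f \<tau>)))"
    using Y_jump_pos phi_pos by (intro sum.cong refl ln_mult_pos) auto
  then show ?thesis unfolding loglik_def by (simp add: sum.distrib)
qed

lemma Xminus_second_difference:
  fixes q q' q'' :: "real \<Rightarrow> real"
  assumes g: "g \<in> W" and h: "h \<in> W" and k: "k \<in> W" and gM: "ip g g \<le> M" and hM: "ip h h \<le> M"
    and e: "\<bar>e\<bar> * (Xminus_bound * ip_norm k) \<le> 1" and s: "s \<in> {0..t}"
    and d1: "\<And>x. (q has_real_derivative q' x) (at x)" and d2: "\<And>x. (q' has_real_derivative q'' x) (at x)"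
    and Kq: "\<And>z. \<bar>z\<bar> \<le> Xminus_bound * sqrt M + 1 \<Longrightarrow> \<bar>q'' z\<bar> \<le> Kq"
  shows "\<bar>second_diff (\<lambda>f. q (Xminus t Z f s)) g h k e\<bar>
    \<le> Kq * (\<bar>e\<bar> * (Xminus_bound * ip_norm k)) * (Xminus_bound * ip_norm (\<lambda>x. g x - h x))"
proof -
  define B where "B = Xminus_bound"
  have B: "0 \<le> B" "\<And>f. f \<in> W \<Longrightarrow> \<bar>Xminus t Z f s\<bar> \<le> B * ip_norm f"
    using Xminus_bound s by (auto simp: B_def)
  have X_shift: "Xminus t Z (\<lambda>x. f x + e * k x) s = Xminus t Z f s + e * Xminus t Z k s" if "f \<in> W" for f
    using Xminus_lincomb[OF that k s, of 1 e] by simp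
  have X_bound: "\<bar>Xminus t Z f s\<bar> \<le> B * sqrt M" if "f \<in> W" "ip f f \<le> M" for f
  proof -
    have "B * ip_norm f \<le> B * sqrt M" using that(2) B(1) by (intro mult_left_mono) auto
    then show ?thesis using B(2)[OF that(1)] by linarith
  qed
  have shift_bound: "\<bar>e * Xminus t Z k s\<bar> \<le> \<bar>e\<bar> * (B * ip_norm k)"
    using B(2)[OF k] by (simp add: abs_mult mult_left_mono)
  have diff_bound: "\<bar>Xminus t Z g s - Xminus t Z h s\<bar> \<le> B * ip_norm (\<lambda>x. g x - h x)"
    using B(2)[OF sobolev_space_lincomb[OF g h, of 1 "-1"]] Xminus_lincomb[OF g h s, of 1 "-1"] by simp
  have "0 \<le> M" using ip_nonneg[OF g] gM by linarith
  then have "\<bar>q'' 0\<bar> \<le> Kq" using B(1) by (intro Kq) (simp add: B_def)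
  then have "0 \<le> Kq" by linarith
  have Kq': "\<And>z. \<bar>z\<bar> \<le> B * sqrt M + 1 \<Longrightarrow> \<bar>q'' z\<bar> \<le> Kq"
    using Kq by (simp add: B_def)
  have e1: "\<bar>e * Xminus t Z k s\<bar> \<le> 1" using shift_bound e unfolding B_def by linarith
  have eq: "second_diff (\<lambda>f. q (Xminus t Z f s)) g h k e
      = q (Xminus t Z g s + e * Xminus t Z k s) - q (Xminus t Z g s)
        - q (Xminus t Z h s + e * Xminus t Z k s) + q (Xminus t Z h s)"
    by (simp add: second_diff_def X_shift[OF g] X_shift[OF h])
  have "\<bar>q (Xminus t Z g s + e * Xminus t Z k s) - q (Xminus t Z g s)
        - q (Xminus t Z h s + e * Xminus t Z k s) + q (Xminus t Z h s)\<bar>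
      \<le> Kq * \<bar>e * Xminus t Z k s\<bar> * \<bar>Xminus t Z g s - Xminus t Z h s\<bar>"
    by (rule second_difference_bound[OF d1 d2 Kq' X_bound[OF g gM] X_bound[OF h hM] e1])
  also have "\<dots> \<le> Kq * (\<bar>e\<bar> * (B * ip_norm k)) * (B * ip_norm (\<lambda>x. g x - h x))"
  proof (rule mult_mono[OF mult_left_mono[OF shift_bound \<open>0 \<le> Kq\<close>] diff_bound])
    show "0 \<le> Kq * (\<bar>e\<bar> * (B * ip_norm k))"
      using \<open>0 \<le> Kq\<close> B(1) ip_nonneg[OF k] by simp
  qed simp
  finally show ?thesis unfolding eq B_def .
qed

lemma intensity_second_difference:
  assumes g: "g \<in> W" and h: "h \<in> W" and k: "k \<in> W" and gM: "ip g g \<le> M" and hM: "ip h h \<le> M"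
    and e: "\<bar>e\<bar> * (Xminus_bound * ip_norm k) \<le> 1"
    and K2: "\<And>z. \<bar>z\<bar> \<le> Xminus_bound * sqrt M + 1 \<Longrightarrow> \<bar>phi'' z\<bar> \<le> K2"
    and KY: "\<And>s. s \<in> {0..t} \<Longrightarrow> \<bar>Y s\<bar> \<le> KY"
  shows "\<bar>second_diff (\<lambda>f. LBINT s:{0..t}. Y s * phi (Xminus t Z f s)) g h k e\<bar>
    \<le> KY * K2 * (\<bar>e\<bar> * (Xminus_bound * ip_norm k)) * (Xminus_bound * ip_norm (\<lambda>x. g x - h x)) * t"
proof -
  define E where "E = \<bar>e\<bar> * (Xminus_bound * ip_norm k)"
  define D where "D = Xminus_bound * ip_norm (\<lambda>x. g x - h x)"
  have int: "set_integrable lborel {0..t} (\<lambda>s. Y s * phi (Xminus t Z f s))"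
    if "f \<in> {g, h, (\<lambda>x. g x + e * k x), (\<lambda>x. h x + e * k x)}" for f
    using that g h k sobolev_space_lincomb[OF g k, of 1 e] sobolev_space_lincomb[OF h k, of 1 e]
    by (auto intro: intensity_integrable)
  have "second_diff (\<lambda>f. LBINT s:{0..t}. Y s * phi (Xminus t Z f s)) g h k e
      = (LBINT s:{0..t}. Y s * second_diff (\<lambda>f. phi (Xminus t Z f s)) g h k e)"
    using int by (simp add: second_diff_def set_integral_diff right_diff_distrib)
  also have "\<bar>\<dots>\<bar> \<le> KY * (K2 * E * D) * (t - 0)"
  proof (rule abs_set_integral_le_bound)
    show "set_integrable lborel {0..t} (\<lambda>s. Y s * second_diff (\<lambda>f. phi (Xminus t Z f s)) g h k e)"
      using int by (simp add: second_diff_def right_diff_distrib)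
    show "\<bar>Y s * second_diff (\<lambda>f. phi (Xminus t Z f s)) g h k e\<bar> \<le> KY * (K2 * E * D)"
      if "s \<in> {0..t}" for s
      unfolding abs_mult E_def D_def
      using Xminus_second_difference[OF g h k gM hM e that phi_deriv[rule_format] phi'_deriv[rule_format] K2]
        KY[OF that] abs_ge_zero[of "phi'' 0"] K2[of 0]
      by (intro mult_mono) auto
  qed (use t_pos in simp)
  finally show ?thesis by (simp add: E_def D_def)
qed

lemma jump_second_difference:
  assumes g: "g \<in> W" and h: "h \<in> W" and k: "k \<in> W" and gM: "ip g g \<le> M" and hM: "ip h h \<le> M"
    and e: "\<bar>e\<bar> * (Xminus_bound * ip_norm k) \<le> 1"
    and Kr: "\<And>z. \<bar>z\<bar> \<le> Xminus_bound * sqrt M + 1 \<Longrightarrow> \<bar>log_phi'' z\<bar> \<le> Kr"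
  shows "\<bar>second_diff (\<lambda>f. \<Sum>\<tau>\<in>J. ln (phi (Xminus t Z f \<tau>))) g h k e\<bar>
    \<le> real (card J) * (Kr * (\<bar>e\<bar> * (Xminus_bound * ip_norm k)) * (Xminus_bound * ip_norm (\<lambda>x. g x - h x)))"
proof -
  have "\<bar>second_diff (\<lambda>f. \<Sum>\<tau>\<in>J. ln (phi (Xminus t Z f \<tau>))) g h k e\<bar>
      \<le> (\<Sum>\<tau>\<in>J. \<bar>second_diff (\<lambda>f. ln (phi (Xminus t Z f \<tau>))) g h k e\<bar>)"
    unfolding second_diff_sum by (rule sum_abs)
  also have "\<dots> \<le> (\<Sum>\<tau>\<in>J. Kr * (\<bar>e\<bar> * (Xminus_bound * ip_norm k)) * (Xminus_bound * ip_norm (\<lambda>x. g x - h x)))"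
    using J_subset
    by (intro sum_mono Xminus_second_difference[OF g h k gM hM e _ ln_phi_deriv log_phi'_deriv Kr]) auto
  finally show ?thesis by simp
qed

lemma loglik_second_difference:
  assumes g: "g \<in> W" and h: "h \<in> W" and k: "k \<in> W" and gM: "ip g g \<le> M" and hM: "ip h h \<le> M"
    and e: "\<bar>e\<bar> * (Xminus_bound * ip_norm k) \<le> 1"
    and K2: "\<And>z. \<bar>z\<bar> \<le> Xminus_bound * sqrt M + 1 \<Longrightarrow> \<bar>phi'' z\<bar> \<le> K2"
    and Kr: "\<And>z. \<bar>z\<bar> \<le> Xminus_bound * sqrt M + 1 \<Longrightarrow> \<bar>log_phi'' z\<bar> \<le> Kr"
    and KY: "\<And>s. s \<in> {0..t} \<Longrightarrow> \<bar>Y s\<bar> \<le> KY"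
  shows "\<bar>second_diff (loglik phi Y Z J t) g h k e\<bar>
    \<le> (KY * K2 * t + real (card J) * Kr) * (\<bar>e\<bar> * (Xminus_bound * ip_norm k)) * (Xminus_bound * ip_norm (\<lambda>x. g x - h x))"
proof -
  have "loglik phi Y Z J t = (\<lambda>f. ((LBINT s:{0..t}. Y s * phi (Xminus t Z f s)) - (\<Sum>\<tau>\<in>J. ln (Y \<tau>)))
      - (\<Sum>\<tau>\<in>J. ln (phi (Xminus t Z f \<tau>))))"
    by (rule ext) (rule loglik_eq)
  then have "second_diff (loglik phi Y Z J t) g h k e
      = second_diff (\<lambda>f. LBINT s:{0..t}. Y s * phi (Xminus t Z f s)) g h k e
        - second_diff (\<lambda>f. \<Sum>\<tau>\<in>J. ln (phi (Xminus t Z f \<tau>))) g h k e"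
    by (simp add: second_diff_diff) (simp add: second_diff_def)
  then show ?thesis
    using intensity_second_difference[OF g h k gM hM e K2 KY] jump_second_difference[OF g h k gM hM e Kr]
    by (simp add: algebra_simps)
qed

lemma loglik_gradient_lipschitz:
  fixes Gl :: "(real \<Rightarrow> real) \<Rightarrow> real \<Rightarrow> real"
  assumes grad: "\<forall>g\<in>W. Gl g \<in> W \<and> (\<forall>h\<in>W. ((\<lambda>\<epsilon>. loglik phi Y Z J t (\<lambda>x. g x + \<epsilon> * h x))
                    has_real_derivative ip (Gl g) h) (at 0))"
  shows "\<exists>C\<ge>0. \<forall>g\<in>W. \<forall>h\<in>W. ip g g \<le> M \<longrightarrow> ip h h \<le> M \<longrightarrow>
           ip_norm (\<lambda>x. Gl g x - Gl h x) \<le> C * ip_norm (\<lambda>x. g x - h x)"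
proof -
  define B where "B = Xminus_bound"
  define R where "R = Xminus_bound * sqrt M + 1"
  have compact_bound: "\<exists>K. \<forall>z. \<bar>z\<bar> \<le> R \<longrightarrow> \<bar>u z\<bar> \<le> K" if "continuous_on UNIV u" for u :: "real \<Rightarrow> real"
    using continuous_on_compact_bound[OF compact_Icc[of "-R" R] continuous_on_subset[OF that]]
    by (metis abs_le_iff atLeastAtMost_iff minus_le_iff real_norm_def subset_UNIV)
  obtain K2 Kr KY where K2: "\<And>z. \<bar>z\<bar> \<le> R \<Longrightarrow> \<bar>phi'' z\<bar> \<le> K2"
    and Kr: "\<And>z. \<bar>z\<bar> \<le> R \<Longrightarrow> \<bar>log_phi'' z\<bar> \<le> Kr" and KY: "\<And>s. s \<in> {0..t} \<Longrightarrow> \<bar>Y s\<bar> \<le> KY"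
    using compact_bound[OF phi''_continuous] compact_bound[OF log_phi''_continuous] Y_bounded by metis
  define C0 where "C0 = KY * K2 * t + real (card J) * Kr"
  define C where "C = \<bar>C0\<bar> * B * B"
  have "0 \<le> C" using Xminus_bound(1) by (simp add: C_def B_def)
  have "ip_norm (\<lambda>x. Gl g x - Gl h x) \<le> C * ip_norm (\<lambda>x. g x - h x)"
    if g: "g \<in> W" and h: "h \<in> W" and gM: "ip g g \<le> M" and hM: "ip h h \<le> M" for g h
  proof -
    define k where "k = (\<lambda>x. Gl g x - Gl h x)"
    have Gg: "Gl g \<in> W" and Gh: "Gl h \<in> W" using grad g h by auto
    have k: "k \<in> W" unfolding k_def using sobolev_space_lincomb[OF Gg Gh, of 1 "-1"] by simp
    have "((\<lambda>e. \<bar>e\<bar> * (B * ip_norm k)) \<longlongrightarrow> 0) (at 0)"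
      by (intro tendsto_mult_left_zero tendsto_rabs_zero tendsto_ident_at)
    then have "\<forall>\<^sub>F e in at 0. \<bar>e\<bar> * (B * ip_norm k) < 1" by (rule order_tendstoD) simp
    then have "\<forall>\<^sub>F e in at 0. \<bar>second_diff (loglik phi Y Z J t) g h k e\<bar> \<le> \<bar>e\<bar> * (C * ip_norm (\<lambda>x. g x - h x) * ip_norm k)"
    proof eventually_elim
      case (elim e)
      have "\<bar>second_diff (loglik phi Y Z J t) g h k e\<bar>
          \<le> C0 * (\<bar>e\<bar> * (B * ip_norm k)) * (B * ip_norm (\<lambda>x. g x - h x))"
        using loglik_second_difference[OF g h k gM hM _ K2 Kr KY] elim by (simp add: B_def R_def C0_def)
      also have "\<dots> \<le> \<bar>C0\<bar> * (\<bar>e\<bar> * (B * ip_norm k)) * (B * ip_norm (\<lambda>x. g x - h x))"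
        using Xminus_bound(1) ip_nonneg[OF k] ip_nonneg[OF sobolev_space_lincomb[OF g h, of 1 "-1"]]
        by (intro mult_right_mono) (auto simp: B_def)
      finally show ?case by (simp add: C_def algebra_simps)
    qed
    moreover define u v where "u e = loglik phi Y Z J t (\<lambda>x. g x + e * k x)"
      and "v e = loglik phi Y Z J t (\<lambda>x. h x + e * k x)" for e
    moreover have "u 0 = loglik phi Y Z J t g" "v 0 = loglik phi Y Z J t h"
      by (simp_all add: u_def v_def)
    ultimately have "\<forall>\<^sub>F e in at 0. \<bar>(u e - u 0) - (v e - v 0)\<bar> \<le> \<bar>e\<bar> * (C * ip_norm (\<lambda>x. g x - h x) * ip_norm k)"
      by (simp add: second_diff_def)
    moreover have "(u has_real_derivative ip (Gl g) k) (at 0)" "(v has_real_derivative ip (Gl h) k) (at 0)"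
      using grad g h k by (auto simp: u_def[abs_def] v_def[abs_def])
    ultimately have "\<bar>ip (Gl g) k - ip (Gl h) k\<bar> \<le> C * ip_norm (\<lambda>x. g x - h x) * ip_norm k"
      by (intro deriv_diff_le_if_increment_bound)
    then have "ip (Gl g) k - ip (Gl h) k \<le> C * ip_norm (\<lambda>x. g x - h x) * ip_norm k"
      by (rule order_trans[OF abs_ge_self])
    moreover have "ip k k = ip (Gl g) k - ip (Gl h) k"
      using ip_lincomb_left[OF Gg Gh k, of 1 "-1"] by (simp add: k_def)
    ultimately have "ip k k \<le> C * ip_norm (\<lambda>x. g x - h x) * ip_norm k"
      by linarith
    moreover have "0 \<le> C * ip_norm (\<lambda>x. g x - h x)"
      using \<open>0 \<le> C\<close> ip_nonneg[OF sobolev_space_lincomb[OF g h, of 1 "-1"]] by simp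
    ultimately show ?thesis
      using ip_norm_le_if_ip_self_le[OF k] by (simp add: k_def)
  qed
  with \<open>0 \<le> C\<close> show ?thesis by blast
qed

end

theorem lemmaA6:
  fixes phi Y Z :: "real \<Rightarrow> real" and J :: "real set" and t lam :: real and m l :: nat
    and ip :: "(real \<Rightarrow> real) \<Rightarrow> (real \<Rightarrow> real) \<Rightarrow> real"
    and R :: "real \<Rightarrow> real \<Rightarrow> real" and psi :: "nat \<Rightarrow> real \<Rightarrow> real"
    and Gl :: "(real \<Rightarrow> real) \<Rightarrow> real \<Rightarrow> real"
  assumes t_pos: "0 < t" and m_pos: "1 \<le> m"
    and phi_pos: "\<forall>x. 0 < phi x"
    and phi_C2: "\<exists>phi' phi''. (\<forall>x. (phi has_real_derivative phi' x) (at x) \<and>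
                                     (phi' has_real_derivative phi'' x) (at x)) \<and>
                               continuous_on UNIV phi''"
    and Z_cadlag: "cadlag_on t Z"
    and Y_cadlag: "cadlag_on t Y" and Y_nonneg: "\<forall>s\<in>{0..t}. 0 \<le> Y s"
    and J_fin: "finite J" and J_sub: "J \<subseteq> {0<..t}" and Y_jump: "\<forall>\<tau>\<in>J. 0 < Y \<tau>"
    and ip: "sobolev_ip m t ip" and kernel: "rkhs_kernel m t ip R"
    and psi: "\<forall>i<l. psi i \<in> sobolev_space m t"
    and lam_pos: "0 < lam"
    and grad: "\<forall>g\<in>sobolev_space m t. Gl g \<in> sobolev_space m t \<and>
                 (\<forall>h\<in>sobolev_space m t.
                    ((\<lambda>\<epsilon>. loglik phi Y Z J t (\<lambda>x. g x + \<epsilon> * h x))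
                       has_real_derivative ip (Gl g) h) (at 0))"
  shows "\<forall>B\<subseteq>sobolev_space m t. (\<exists>M. \<forall>g\<in>B. ip g g \<le> M) \<longrightarrow>
           (\<exists>L. \<forall>g\<in>B. \<forall>h\<in>B.
              (let DG = (\<lambda>x. (Gl g x + 2 * lam * orth_proj m t ip psi l g x)
                             - (Gl h x + 2 * lam * orth_proj m t ip psi l h x))
               in sqrt (ip DG DG)) \<le> L * sqrt (ip (\<lambda>x. g x - h x) (\<lambda>x. g x - h x)))"
proof (intro allI impI)
  obtain phi' phi'' where "\<forall>x. (phi has_real_derivative phi' x) (at x) \<and> (phi' has_real_derivative phi'' x) (at x)"
    and "continuous_on UNIV phi''" using phi_C2 by blast
  then interpret log_likelihood m t ip Z phi Y J phi' phi''
    using t_pos m_pos ip Z_cadlag phi_pos Y_cadlag J_fin J_sub Y_jump by unfold_locales auto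
  fix B assume B: "B \<subseteq> W" and "\<exists>M. \<forall>g\<in>B. ip g g \<le> M"
  then obtain M where M: "\<forall>g\<in>B. ip g g \<le> M" by blast
  obtain C where C: "\<forall>g\<in>W. \<forall>h\<in>W. ip g g \<le> M \<longrightarrow> ip h h \<le> M \<longrightarrow>
      ip_norm (\<lambda>x. Gl g x - Gl h x) \<le> C * ip_norm (\<lambda>x. g x - h x)"
    using loglik_gradient_lipschitz[OF grad] by blast
  have "ip_norm (\<lambda>x. (Gl g x + 2 * lam * orth_proj m t ip psi l g x) - (Gl h x + 2 * lam * orth_proj m t ip psi l h x))
      \<le> (C + 2 * lam) * ip_norm (\<lambda>x. g x - h x)" if g: "g \<in> B" and h: "h \<in> B" for g h
  proof -
    have gW: "g \<in> W" and hW: "h \<in> W" using g h B by auto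
    have "(\<lambda>x. (Gl g x + 2 * lam * orth_proj m t ip psi l g x) - (Gl h x + 2 * lam * orth_proj m t ip psi l h x))
        = (\<lambda>x. (Gl g x - Gl h x) + 2 * lam * (orth_proj m t ip psi l g x - orth_proj m t ip psi l h x))"
      by (simp add: fun_eq_iff algebra_simps)
    moreover have "(\<lambda>x. Gl g x - Gl h x) \<in> W"
      using grad gW hW sobolev_space_lincomb[of "Gl g" m t "Gl h" 1 "-1"] by simp
    ultimately show ?thesis
      using ip_norm_add_scaled_le[OF _ orth_proj_nonexpansive[OF psi gW hW], of _ C "2 * lam"]
        C gW hW M g h lam_pos
      by simp
  qed
  then show "\<exists>L. \<forall>g\<in>B. \<forall>h\<in>B. (let DG = (\<lambda>x. (Gl g x + 2 * lam * orth_proj m t ip psi l g x)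
        - (Gl h x + 2 * lam * orth_proj m t ip psi l h x)) in ip_norm DG) \<le> L * ip_norm (\<lambda>x. g x - h x)"
    by (auto simp: Let_def)
qed

end
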